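(* Let $(\mathscr C,A,\psi)$ be an entwining structure with $A$ finite dimensional over $K$, and suppose there exists a normalized cointegral $\gamma=\{\gamma_X:A^*\otimes\mathscr C(X,X)\to A\}_{X\in Ob(\mathscr C)}$ on $(\mathscr C,A,\psi)$. Then (a) the forgetful functor $G_\psi:Com^{\mathscr C}_A(\psi)\to Com^{\mathscr C}$ is a semisimple functor, and (b) $G_\psi$ is a Maschke functor.
   Context: $K$ is a field. A $K$-coalgebra with several objects $\mathscr C$: a set $Ob(\mathscr C)$, vector spaces $\mathscr C(X,Y)$, linear comultiplications $\delta_{XYZ}:\mathscr C(X,Z)\to\mathscr C(Y,Z)\otimes\mathscr C(X,Y)$ and counits $\epsilon_X:\mathscr C(X,X)\to K$, with $(\delta_{YWZ}\otimes\mathrm{id})\delta_{XYZ}=(\mathrm{id}\otimes\delta_{XYW})\delta_{XWZ}$ and $(\epsilon_Y\otimes\mathrm{id})\delta_{XYY}=\mathrm{id}=(\mathrm{id}\otimes\epsilon_X)\delta_{XXY}$. For a $K$-algebra $A$ (multiplication $\mu_A$, unit $u_A$), an entwining structure $(\mathscr C,A,\psi)$ is a family of linear maps $\psi_{XY}:\mathscr C(X,Y)\otimes A\to A\otimes\mathscr C(X,Y)$, $\psi_{XY}(f\otimes a)=a_\psi\otimes f^\psi$, with (i) $(\mathrm{id}_A\otimes\delta_{XYZ})\psi_{XZ}=(\psi_{YZ}\otimes\mathrm{id})(\mathrm{id}\otimes\psi_{XY})(\delta_{XYZ}\otimes\mathrm{id}_A)$; (ii) $\psi_{XZ}(\mathrm{id}\otimes\mu_A)=(\mu_A\otimes\mathrm{id})(\mathrm{id}_A\otimes\psi_{XZ})(\psi_{XZ}\otimes\mathrm{id}_A)$;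 (iii) $\psi_{XZ}(f\otimes1)=1\otimes f$; (iv) $\epsilon_Z(g^\psi)a_\psi=\epsilon_Z(g)a$. $Com^{\mathscr C}$: right $\mathscr C$-comodules (spaces $\mathcal M(X)$, coactions $\rho_{XY}(m)=m_{Y0}\otimes m_{Y1}\in\mathcal M(Y)\otimes\mathscr C(X,Y)$ with $(\rho_{ZY}\otimes\mathrm{id})\rho_{XZ}=(\mathrm{id}\otimes\delta_{XZY})\rho_{XY}$, $(\mathrm{id}\otimes\epsilon_X)\rho_{XX}=\mathrm{id}$) with coaction-compatible morphisms; abelian with exactness objectwise. $Com^{\mathscr C}_A(\psi)$: comodules with right $A$-module structures on each $\mathcal M(X)$ such that $\rho_{XY}(ma)=m_{Y0}a_\psi\otimes(m_{Y1})^\psi$, with $A$-linear comodule morphisms; $G_\psi$ forgets the $A$-actions. $coev_A:K\to A\otimes A^*$, $1\mapsto\sum_ia_i\otimes a_i^*$ (basis and dual basis). A normalized cointegral is a family of linear maps $\gamma_X:A^*\otimes\mathscr C(X,X)\to A$ with: (1) $(\mathrm{id}_A\otimes\psi_{XY})(\psi_{XY}\otimes\gamma_X)(\mathrm{id}\otimes coev_A\otimes\mathrm{id})\delta_{XXY}=(\mathrm{id}_A\otimes\gamma_Y\otimes\mathrm{id})(coev_A\otimes\delta_{XYY})$ as maps $\mathscr C(X,Y)\to A\otimes A\otimes\mathscr C(X,Y)$; (2) $(\mathrm{id}_A\otimes\mu_A)(\mathrm{id}_A\otimes\gamma_X\otimes\mathrm{id}_A)(coev_A\otimes\mathrm{id}\otimes\mathrm{id}_A)=(\mu_A\otimes\gamma_X)(\mathrm{id}_A\otimes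 coev_A\otimes\mathrm{id})\psi_{XX}$ as maps $\mathscr C(X,X)\otimes A\to A\otimes A$; (3) $\mu_A(\mathrm{id}_A\otimes\gamma_X)(coev_A\otimes\mathrm{id})=u_A\circ\epsilon_X$ on $\mathscr C(X,X)$. A functor $F:\mathcal D\to\mathcal D'$ between abelian categories is semisimple if every short exact sequence in $\mathcal D$ whose image under $F$ is split exact in $\mathcal D'$ splits in $\mathcal D$; it is Maschke if for all morphisms $i:X\to X'$, $f:X\to Y$ in $\mathcal D$ with $F(i)$ a split monomorphism in $\mathcal D'$ there is $g:X'\to Y$ with $g\circ i=f$. *)

theory Defs
  imports Main
begin

text \<open>A K-vector space with basis B (a subset of a type 'b) is represented as the set FS B
  of finitely supported coordinate functions 'b => 'k with support inside B.
  The tensor product of FS B and FS D is FS (B \<times> D).\<close>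

definition fsupp :: "('b \<Rightarrow> 'k::zero) \<Rightarrow> 'b set" where
  "fsupp f = {x. f x \<noteq> 0}"

definition FS :: "'b set \<Rightarrow> ('b \<Rightarrow> 'k::zero) set" where
  "FS B = {f. finite (fsupp f) \<and> fsupp f \<subseteq> B}"

definition vzero :: "'b \<Rightarrow> 'k::zero" where
  "vzero = (\<lambda>_. 0)"

definition vadd :: "('b \<Rightarrow> 'k::plus) \<Rightarrow> ('b \<Rightarrow> 'k) \<Rightarrow> ('b \<Rightarrow> 'k)" where
  "vadd f g = (\<lambda>x. f x + g x)"

definition vsmul :: "'k::times \<Rightarrow> ('b \<Rightarrow> 'k) \<Rightarrow> ('b \<Rightarrow> 'k)" where
  "vsmul c f = (\<lambda>x. c * f x)"

definition bvec :: "'b \<Rightarrow> ('b \<Rightarrow> 'k::{zero,one})" where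
  "bvec b = (\<lambda>x. if x = b then 1 else 0)"

definition linear_on :: "'b set \<Rightarrow> 'd set \<Rightarrow> (('b \<Rightarrow> 'k::field) \<Rightarrow> ('d \<Rightarrow> 'k)) \<Rightarrow> bool" where
  "linear_on B D \<phi> \<longleftrightarrow>
     (\<forall>f\<in>FS B. \<phi> f \<in> FS D) \<and>
     (\<forall>f\<in>FS B. \<forall>g\<in>FS B. \<phi> (vadd f g) = vadd (\<phi> f) (\<phi> g)) \<and>
     (\<forall>c. \<forall>f\<in>FS B. \<phi> (vsmul c f) = vsmul c (\<phi> f))"

definition lfun_on :: "'b set \<Rightarrow> (('b \<Rightarrow> 'k::field) \<Rightarrow> 'k) \<Rightarrow> bool" where
  "lfun_on B e \<longleftrightarrow>
     (\<forall>f\<in>FS B. \<forall>g\<in>FS B. e (vadd f g) = e f + e g) \<and>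
     (\<forall>c. \<forall>f\<in>FS B. e (vsmul c f) = c * e f)"

definition tens :: "('b \<Rightarrow> 'k::times) \<Rightarrow> ('d \<Rightarrow> 'k) \<Rightarrow> ('b \<times> 'd \<Rightarrow> 'k)" where
  "tens f g = (\<lambda>(x, y). f x * g y)"

definition tmap :: "(('b \<Rightarrow> 'k::comm_ring_1) \<Rightarrow> ('d \<Rightarrow> 'k)) \<Rightarrow> (('e \<Rightarrow> 'k) \<Rightarrow> ('g \<Rightarrow> 'k))
                     \<Rightarrow> ('b \<times> 'e \<Rightarrow> 'k) \<Rightarrow> ('d \<times> 'g \<Rightarrow> 'k)" where
  "tmap \<phi> \<chi> t = (\<lambda>(x, y). \<Sum>p\<in>fsupp t. t p * (\<phi> (bvec (fst p)) x * \<chi> (bvec (snd p)) y))"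

definition assocr :: "(('x \<times> 'y) \<times> 'z \<Rightarrow> 'k) \<Rightarrow> ('x \<times> ('y \<times> 'z) \<Rightarrow> 'k)" where
  "assocr t = (\<lambda>(x, (y, z)). t ((x, y), z))"

definition assocl :: "('x \<times> ('y \<times> 'z) \<Rightarrow> 'k) \<Rightarrow> (('x \<times> 'y) \<times> 'z \<Rightarrow> 'k)" where
  "assocl t = (\<lambda>((x, y), z). t (x, (y, z)))"

text \<open>(e \<otimes> id) : V \<otimes> W -> K \<otimes> W = W  and  (id \<otimes> e) : V \<otimes> W -> V \<otimes> K = V\<close>
definition econtr_l :: "(('b \<Rightarrow> 'k::comm_ring_1) \<Rightarrow> 'k) \<Rightarrow> ('b \<times> 'd \<Rightarrow> 'k) \<Rightarrow> ('d \<Rightarrow> 'k)" where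
  "econtr_l e t = (\<lambda>y. \<Sum>p\<in>fsupp t. if snd p = y then e (bvec (fst p)) * t p else 0)"

definition econtr_r :: "(('d \<Rightarrow> 'k::comm_ring_1) \<Rightarrow> 'k) \<Rightarrow> ('b \<times> 'd \<Rightarrow> 'k) \<Rightarrow> ('b \<Rightarrow> 'k)" where
  "econtr_r e t = (\<lambda>x. \<Sum>p\<in>fsupp t. if fst p = x then t p * e (bvec (snd p)) else 0)"

text \<open>u \<otimes> v \<mapsto> (first half of u) \<otimes> v \<otimes> (second half of u), i.e. (id \<otimes> v \<otimes> id) applied to u,
  for v an element of V1 \<otimes> V2 (used to insert coev in the middle)\<close>
definition ins_mid :: "('a1 \<times> 'a2 \<Rightarrow> 'k::times) \<Rightarrow> ('c1 \<times> 'c2 \<Rightarrow> 'k) \<Rightarrow> (('c1 \<times> 'a1) \<times> ('a2 \<times> 'c2) \<Rightarrow> 'k)" where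
  "ins_mid v s = (\<lambda>((c1, a), (b, c2)). s (c1, c2) * v (a, b))"

text \<open>Objects: Ob. The space C(X,Y) is FS (Cb X Y).
  delta X Y Z : C(X,Z) -> C(Y,Z) \<otimes> C(X,Y);  eps X : C(X,X) -> K.\<close>
definition coalg_so ::
  "'o set \<Rightarrow> ('o \<Rightarrow> 'o \<Rightarrow> 'c set) \<Rightarrow> ('o \<Rightarrow> 'o \<Rightarrow> 'o \<Rightarrow> ('c \<Rightarrow> 'k::field) \<Rightarrow> ('c \<times> 'c \<Rightarrow> 'k))
   \<Rightarrow> ('o \<Rightarrow> ('c \<Rightarrow> 'k) \<Rightarrow> 'k) \<Rightarrow> bool" where
  "coalg_so Ob Cb \<delta> \<epsilon> \<longleftrightarrow>
     (\<forall>X\<in>Ob. \<forall>Y\<in>Ob. \<forall>Z\<in>Ob. linear_on (Cb X Z) (Cb Y Z \<times> Cb X Y) (\<delta> X Y Z)) \<and>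
     (\<forall>X\<in>Ob. lfun_on (Cb X X) (\<epsilon> X)) \<and>
     (\<forall>X\<in>Ob. \<forall>Y\<in>Ob. \<forall>W\<in>Ob. \<forall>Z\<in>Ob. \<forall>f\<in>FS (Cb X Z).
        assocr (tmap (\<delta> Y W Z) id (\<delta> X Y Z f)) = tmap id (\<delta> X Y W) (\<delta> X W Z f)) \<and>
     (\<forall>X\<in>Ob. \<forall>Y\<in>Ob. \<forall>f\<in>FS (Cb X Y).
        econtr_l (\<epsilon> Y) (\<delta> X Y Y f) = f \<and> econtr_r (\<epsilon> X) (\<delta> X X Y f) = f)"

text \<open>A = FS BA, multiplication mu : A \<otimes> A -> A, unit element one (u_A(1) = one)\<close>
definition kalg :: "'a set \<Rightarrow> (('a \<times> 'a \<Rightarrow> 'k::field) \<Rightarrow> ('a \<Rightarrow> 'k)) \<Rightarrow> ('a \<Rightarrow> 'k) \<Rightarrow> bool" where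
  "kalg BA mu one \<longleftrightarrow>
     linear_on (BA \<times> BA) BA mu \<and> one \<in> FS BA \<and>
     (\<forall>t\<in>FS ((BA \<times> BA) \<times> BA). mu (tmap mu id t) = mu (tmap id mu (assocr t))) \<and>
     (\<forall>a\<in>FS BA. mu (tens one a) = a \<and> mu (tens a one) = a)"

definition entwining ::
  "'o set \<Rightarrow> ('o \<Rightarrow> 'o \<Rightarrow> 'c set) \<Rightarrow> ('o \<Rightarrow> 'o \<Rightarrow> 'o \<Rightarrow> ('c \<Rightarrow> 'k::field) \<Rightarrow> ('c \<times> 'c \<Rightarrow> 'k))
   \<Rightarrow> ('o \<Rightarrow> ('c \<Rightarrow> 'k) \<Rightarrow> 'k) \<Rightarrow> 'a set \<Rightarrow> (('a \<times> 'a \<Rightarrow> 'k) \<Rightarrow> ('a \<Rightarrow> 'k)) \<Rightarrow> ('a \<Rightarrow> 'k)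
   \<Rightarrow> ('o \<Rightarrow> 'o \<Rightarrow> ('c \<times> 'a \<Rightarrow> 'k) \<Rightarrow> ('a \<times> 'c \<Rightarrow> 'k)) \<Rightarrow> bool" where
  "entwining Ob Cb \<delta> \<epsilon> BA mu one \<psi> \<longleftrightarrow>
     (\<forall>X\<in>Ob. \<forall>Y\<in>Ob. linear_on (Cb X Y \<times> BA) (BA \<times> Cb X Y) (\<psi> X Y)) \<and>
     \<comment> \<open>(i)\<close>
     (\<forall>X\<in>Ob. \<forall>Y\<in>Ob. \<forall>Z\<in>Ob. \<forall>t\<in>FS (Cb X Z \<times> BA).
        tmap id (\<delta> X Y Z) (\<psi> X Z t) =
        assocr (tmap (\<psi> Y Z) id (assocl (tmap id (\<psi> X Y) (assocr (tmap (\<delta> X Y Z) id t)))))) \<and>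
     \<comment> \<open>(ii)\<close>
     (\<forall>X\<in>Ob. \<forall>Z\<in>Ob. \<forall>t\<in>FS (Cb X Z \<times> (BA \<times> BA)).
        \<psi> X Z (tmap id mu t) =
        tmap mu id (assocl (tmap id (\<psi> X Z) (assocr (tmap (\<psi> X Z) id (assocl t)))))) \<and>
     \<comment> \<open>(iii)\<close>
     (\<forall>X\<in>Ob. \<forall>Z\<in>Ob. \<forall>f\<in>FS (Cb X Z). \<psi> X Z (tens f one) = tens one f) \<and>
     \<comment> \<open>(iv), for g in C(Z,Z)\<close>
     (\<forall>Z\<in>Ob. \<forall>t\<in>FS (Cb Z Z \<times> BA). econtr_r (\<epsilon> Z) (\<psi> Z Z t) = econtr_l (\<epsilon> Z) t)"

text \<open>A is finite dimensional with basis BA; A^* is represented by coordinates w.r.t. the dual basis,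
  i.e. again as FS BA (the dual basis vector a_b^* corresponds to bvec b).
  coev_A = \<Sum>_b a_b \<otimes> a_b^* in A \<otimes> A^*.\<close>
definition coev :: "'a set \<Rightarrow> ('a \<times> 'a \<Rightarrow> 'k::{zero,one})" where
  "coev BA = (\<lambda>(x, y). if x = y \<and> x \<in> BA then 1 else 0)"

text \<open>gam X : A^* \<otimes> C(X,X) -> A\<close>
definition norm_cointegral ::
  "'o set \<Rightarrow> ('o \<Rightarrow> 'o \<Rightarrow> 'c set) \<Rightarrow> ('o \<Rightarrow> 'o \<Rightarrow> 'o \<Rightarrow> ('c \<Rightarrow> 'k::field) \<Rightarrow> ('c \<times> 'c \<Rightarrow> 'k))
   \<Rightarrow> ('o \<Rightarrow> ('c \<Rightarrow> 'k) \<Rightarrow> 'k) \<Rightarrow> 'a set \<Rightarrow> (('a \<times> 'a \<Rightarrow> 'k) \<Rightarrow> ('a \<Rightarrow> 'k)) \<Rightarrow> ('a \<Rightarrow> 'k)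
   \<Rightarrow> ('o \<Rightarrow> 'o \<Rightarrow> ('c \<times> 'a \<Rightarrow> 'k) \<Rightarrow> ('a \<times> 'c \<Rightarrow> 'k))
   \<Rightarrow> ('o \<Rightarrow> ('a \<times> 'c \<Rightarrow> 'k) \<Rightarrow> ('a \<Rightarrow> 'k)) \<Rightarrow> bool" where
  "norm_cointegral Ob Cb \<delta> \<epsilon> BA mu one \<psi> \<gamma> \<longleftrightarrow>
     (\<forall>X\<in>Ob. linear_on (BA \<times> Cb X X) BA (\<gamma> X)) \<and>
     \<comment> \<open>(1)\<close>
     (\<forall>X\<in>Ob. \<forall>Y\<in>Ob. \<forall>f\<in>FS (Cb X Y).
        tmap id (\<psi> X Y) (assocr (tmap (\<psi> X Y) (\<gamma> X) (ins_mid (coev BA) (\<delta> X X Y f)))) =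
        tmap id (tmap (\<gamma> Y) id) (tmap id assocl (assocr (tens (coev BA) (\<delta> X Y Y f))))) \<and>
     \<comment> \<open>(2)\<close>
     (\<forall>X\<in>Ob. \<forall>t\<in>FS (Cb X X \<times> BA).
        tmap id mu (tmap id (tmap (\<gamma> X) id) (tmap id assocl (assocr (tens (coev BA) t)))) =
        tmap mu (\<gamma> X) (ins_mid (coev BA) (\<psi> X X t))) \<and>
     \<comment> \<open>(3)\<close>
     (\<forall>X\<in>Ob. \<forall>f\<in>FS (Cb X X).
        mu (tmap id (\<gamma> X) (assocr (tens (coev BA) f))) = vsmul (\<epsilon> X f) one)"

text \<open>A right C-comodule: spaces M(X) = FS (BM X), coactions rho X Y : M(X) -> M(Y) \<otimes> C(X,Y)\<close>
definition comod ::
  "'o set \<Rightarrow> ('o \<Rightarrow> 'o \<Rightarrow> 'c set) \<Rightarrow> ('o \<Rightarrow> 'o \<Rightarrow> 'o \<Rightarrow> ('c \<Rightarrow> 'k::field) \<Rightarrow> ('c \<times> 'c \<Rightarrow> 'k))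
   \<Rightarrow> ('o \<Rightarrow> ('c \<Rightarrow> 'k) \<Rightarrow> 'k) \<Rightarrow> ('o \<Rightarrow> 'm set) \<Rightarrow> ('o \<Rightarrow> 'o \<Rightarrow> ('m \<Rightarrow> 'k) \<Rightarrow> ('m \<times> 'c \<Rightarrow> 'k)) \<Rightarrow> bool" where
  "comod Ob Cb \<delta> \<epsilon> BM \<rho> \<longleftrightarrow>
     (\<forall>X\<in>Ob. \<forall>Y\<in>Ob. linear_on (BM X) (BM Y \<times> Cb X Y) (\<rho> X Y)) \<and>
     (\<forall>X\<in>Ob. \<forall>Y\<in>Ob. \<forall>Z\<in>Ob. \<forall>m\<in>FS (BM X).
        assocr (tmap (\<rho> Z Y) id (\<rho> X Z m)) = tmap id (\<delta> X Z Y) (\<rho> X Y m)) \<and>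
     (\<forall>X\<in>Ob. \<forall>m\<in>FS (BM X). econtr_r (\<epsilon> X) (\<rho> X X m) = m)"

definition comod_hom ::
  "'o set \<Rightarrow> ('o \<Rightarrow> 'o \<Rightarrow> 'c set) \<Rightarrow> ('o \<Rightarrow> 'm set) \<Rightarrow> ('o \<Rightarrow> 'o \<Rightarrow> ('m \<Rightarrow> 'k::field) \<Rightarrow> ('m \<times> 'c \<Rightarrow> 'k))
   \<Rightarrow> ('o \<Rightarrow> 'n set) \<Rightarrow> ('o \<Rightarrow> 'o \<Rightarrow> ('n \<Rightarrow> 'k) \<Rightarrow> ('n \<times> 'c \<Rightarrow> 'k))
   \<Rightarrow> ('o \<Rightarrow> ('m \<Rightarrow> 'k) \<Rightarrow> ('n \<Rightarrow> 'k)) \<Rightarrow> bool" where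
  "comod_hom Ob Cb BM \<rho>M BN \<rho>N \<phi> \<longleftrightarrow>
     (\<forall>X\<in>Ob. linear_on (BM X) (BN X) (\<phi> X)) \<and>
     (\<forall>X\<in>Ob. \<forall>Y\<in>Ob. \<forall>m\<in>FS (BM X). \<rho>N X Y (\<phi> X m) = tmap (\<phi> Y) id (\<rho>M X Y m))"

text \<open>objects of Com^C_A(psi): comodules with right A-actions act X : M(X) \<otimes> A -> M(X)
  such that rho X Y (m a) = m_{Y0} a_psi \<otimes> (m_{Y1})^psi\<close>
definition comodA ::
  "'o set \<Rightarrow> ('o \<Rightarrow> 'o \<Rightarrow> 'c set) \<Rightarrow> ('o \<Rightarrow> 'o \<Rightarrow> 'o \<Rightarrow> ('c \<Rightarrow> 'k::field) \<Rightarrow> ('c \<times> 'c \<Rightarrow> 'k))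
   \<Rightarrow> ('o \<Rightarrow> ('c \<Rightarrow> 'k) \<Rightarrow> 'k) \<Rightarrow> 'a set \<Rightarrow> (('a \<times> 'a \<Rightarrow> 'k) \<Rightarrow> ('a \<Rightarrow> 'k)) \<Rightarrow> ('a \<Rightarrow> 'k)
   \<Rightarrow> ('o \<Rightarrow> 'o \<Rightarrow> ('c \<times> 'a \<Rightarrow> 'k) \<Rightarrow> ('a \<times> 'c \<Rightarrow> 'k))
   \<Rightarrow> ('o \<Rightarrow> 'm set) \<Rightarrow> ('o \<Rightarrow> 'o \<Rightarrow> ('m \<Rightarrow> 'k) \<Rightarrow> ('m \<times> 'c \<Rightarrow> 'k))
   \<Rightarrow> ('o \<Rightarrow> ('m \<times> 'a \<Rightarrow> 'k) \<Rightarrow> ('m \<Rightarrow> 'k)) \<Rightarrow> bool" where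
  "comodA Ob Cb \<delta> \<epsilon> BA mu one \<psi> BM \<rho> act \<longleftrightarrow>
     comod Ob Cb \<delta> \<epsilon> BM \<rho> \<and>
     (\<forall>X\<in>Ob. linear_on (BM X \<times> BA) (BM X) (act X)) \<and>
     (\<forall>X\<in>Ob. \<forall>t\<in>FS ((BM X \<times> BA) \<times> BA).
        act X (tmap (act X) id t) = act X (tmap id mu (assocr t))) \<and>
     (\<forall>X\<in>Ob. \<forall>m\<in>FS (BM X). act X (tens m one) = m) \<and>
     (\<forall>X\<in>Ob. \<forall>Y\<in>Ob. \<forall>t\<in>FS (BM X \<times> BA).
        \<rho> X Y (act X t) =
        tmap (act Y) id (assocl (tmap id (\<psi> X Y) (assocr (tmap (\<rho> X Y) id t)))))"

definition comodA_hom ::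
  "'o set \<Rightarrow> ('o \<Rightarrow> 'o \<Rightarrow> 'c set) \<Rightarrow> 'a set
   \<Rightarrow> ('o \<Rightarrow> 'm set) \<Rightarrow> ('o \<Rightarrow> 'o \<Rightarrow> ('m \<Rightarrow> 'k::field) \<Rightarrow> ('m \<times> 'c \<Rightarrow> 'k)) \<Rightarrow> ('o \<Rightarrow> ('m \<times> 'a \<Rightarrow> 'k) \<Rightarrow> ('m \<Rightarrow> 'k))
   \<Rightarrow> ('o \<Rightarrow> 'n set) \<Rightarrow> ('o \<Rightarrow> 'o \<Rightarrow> ('n \<Rightarrow> 'k) \<Rightarrow> ('n \<times> 'c \<Rightarrow> 'k)) \<Rightarrow> ('o \<Rightarrow> ('n \<times> 'a \<Rightarrow> 'k) \<Rightarrow> ('n \<Rightarrow> 'k))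
   \<Rightarrow> ('o \<Rightarrow> ('m \<Rightarrow> 'k) \<Rightarrow> ('n \<Rightarrow> 'k)) \<Rightarrow> bool" where
  "comodA_hom Ob Cb BA BM \<rho>M actM BN \<rho>N actN \<phi> \<longleftrightarrow>
     comod_hom Ob Cb BM \<rho>M BN \<rho>N \<phi> \<and>
     (\<forall>X\<in>Ob. \<forall>t\<in>FS (BM X \<times> BA). \<phi> X (actM X t) = actN X (tmap (\<phi> X) id t))"

definition short_exact ::
  "'o set \<Rightarrow> ('o \<Rightarrow> 'm1 set) \<Rightarrow> ('o \<Rightarrow> 'm2 set) \<Rightarrow> ('o \<Rightarrow> 'm3 set)
   \<Rightarrow> ('o \<Rightarrow> ('m1 \<Rightarrow> 'k::zero) \<Rightarrow> ('m2 \<Rightarrow> 'k)) \<Rightarrow> ('o \<Rightarrow> ('m2 \<Rightarrow> 'k) \<Rightarrow> ('m3 \<Rightarrow> 'k)) \<Rightarrow> bool" where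
  "short_exact Ob B1 B2 B3 i p \<longleftrightarrow>
     (\<forall>X\<in>Ob. inj_on (i X) (FS (B1 X)) \<and> p X ` FS (B2 X) = FS (B3 X) \<and>
              {m \<in> FS (B2 X). p X m = vzero} = i X ` FS (B1 X))"

text \<open>A short exact sequence is split iff its monomorphism has a retraction.
  G_psi is semisimple: every short exact sequence in Com^C_A(psi) whose image under G_psi
  (same maps, forgetting the A-actions) splits in Com^C, splits in Com^C_A(psi).
  The type arguments fix the (arbitrary) types carrying the bases of the comodules.\<close>
definition Gpsi_semisimple ::
  "'o set \<Rightarrow> ('o \<Rightarrow> 'o \<Rightarrow> 'c set) \<Rightarrow> ('o \<Rightarrow> 'o \<Rightarrow> 'o \<Rightarrow> ('c \<Rightarrow> 'k::field) \<Rightarrow> ('c \<times> 'c \<Rightarrow> 'k))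
   \<Rightarrow> ('o \<Rightarrow> ('c \<Rightarrow> 'k) \<Rightarrow> 'k) \<Rightarrow> 'a set \<Rightarrow> (('a \<times> 'a \<Rightarrow> 'k) \<Rightarrow> ('a \<Rightarrow> 'k)) \<Rightarrow> ('a \<Rightarrow> 'k)
   \<Rightarrow> ('o \<Rightarrow> 'o \<Rightarrow> ('c \<times> 'a \<Rightarrow> 'k) \<Rightarrow> ('a \<times> 'c \<Rightarrow> 'k))
   \<Rightarrow> 'm1 itself \<Rightarrow> 'm2 itself \<Rightarrow> 'm3 itself \<Rightarrow> bool" where
  "Gpsi_semisimple Ob Cb \<delta> \<epsilon> BA mu one \<psi> T1 T2 T3 \<longleftrightarrow>
     (\<forall>(B1 :: 'o \<Rightarrow> 'm1 set) \<rho>1 act1 (B2 :: 'o \<Rightarrow> 'm2 set) \<rho>2 act2 (B3 :: 'o \<Rightarrow> 'm3 set) \<rho>3 act3 i p.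
        comodA Ob Cb \<delta> \<epsilon> BA mu one \<psi> B1 \<rho>1 act1 \<and>
        comodA Ob Cb \<delta> \<epsilon> BA mu one \<psi> B2 \<rho>2 act2 \<and>
        comodA Ob Cb \<delta> \<epsilon> BA mu one \<psi> B3 \<rho>3 act3 \<and>
        comodA_hom Ob Cb BA B1 \<rho>1 act1 B2 \<rho>2 act2 i \<and>
        comodA_hom Ob Cb BA B2 \<rho>2 act2 B3 \<rho>3 act3 p \<and>
        short_exact Ob B1 B2 B3 i p \<and>
        (\<exists>r. comod_hom Ob Cb B2 \<rho>2 B1 \<rho>1 r \<and> (\<forall>X\<in>Ob. \<forall>m\<in>FS (B1 X). r X (i X m) = m))
        \<longrightarrow>
        (\<exists>r. comodA_hom Ob Cb BA B2 \<rho>2 act2 B1 \<rho>1 act1 r \<and> (\<forall>X\<in>Ob. \<forall>m\<in>FS (B1 X). r X (i X m) = m)))"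

text \<open>G_psi is Maschke: for morphisms i : M1 -> M2, f : M1 -> M3 in Com^C_A(psi) with G_psi(i) a split
  monomorphism in Com^C, there is g : M2 -> M3 in Com^C_A(psi) with g \<circ> i = f.\<close>
definition Gpsi_Maschke ::
  "'o set \<Rightarrow> ('o \<Rightarrow> 'o \<Rightarrow> 'c set) \<Rightarrow> ('o \<Rightarrow> 'o \<Rightarrow> 'o \<Rightarrow> ('c \<Rightarrow> 'k::field) \<Rightarrow> ('c \<times> 'c \<Rightarrow> 'k))
   \<Rightarrow> ('o \<Rightarrow> ('c \<Rightarrow> 'k) \<Rightarrow> 'k) \<Rightarrow> 'a set \<Rightarrow> (('a \<times> 'a \<Rightarrow> 'k) \<Rightarrow> ('a \<Rightarrow> 'k)) \<Rightarrow> ('a \<Rightarrow> 'k)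
   \<Rightarrow> ('o \<Rightarrow> 'o \<Rightarrow> ('c \<times> 'a \<Rightarrow> 'k) \<Rightarrow> ('a \<times> 'c \<Rightarrow> 'k))
   \<Rightarrow> 'm1 itself \<Rightarrow> 'm2 itself \<Rightarrow> 'm3 itself \<Rightarrow> bool" where
  "Gpsi_Maschke Ob Cb \<delta> \<epsilon> BA mu one \<psi> T1 T2 T3 \<longleftrightarrow>
     (\<forall>(B1 :: 'o \<Rightarrow> 'm1 set) \<rho>1 act1 (B2 :: 'o \<Rightarrow> 'm2 set) \<rho>2 act2 (B3 :: 'o \<Rightarrow> 'm3 set) \<rho>3 act3 i f.
        comodA Ob Cb \<delta> \<epsilon> BA mu one \<psi> B1 \<rho>1 act1 \<and>
        comodA Ob Cb \<delta> \<epsilon> BA mu one \<psi> B2 \<rho>2 act2 \<and>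
        comodA Ob Cb \<delta> \<epsilon> BA mu one \<psi> B3 \<rho>3 act3 \<and>
        comodA_hom Ob Cb BA B1 \<rho>1 act1 B2 \<rho>2 act2 i \<and>
        comodA_hom Ob Cb BA B1 \<rho>1 act1 B3 \<rho>3 act3 f \<and>
        (\<exists>r. comod_hom Ob Cb B2 \<rho>2 B1 \<rho>1 r \<and> (\<forall>X\<in>Ob. \<forall>m\<in>FS (B1 X). r X (i X m) = m))
        \<longrightarrow>
        (\<exists>g. comodA_hom Ob Cb BA B2 \<rho>2 act2 B3 \<rho>3 act3 g \<and> (\<forall>X\<in>Ob. \<forall>m\<in>FS (B1 X). g X (i X m) = f X m)))"

end

theory Submission
  imports Defs
begin

text \<open>Let \<open>i : M1 \<rightarrow> M2\<close> and \<open>f : M1 \<rightarrow> M3\<close> be morphisms of entwined modules and \<open>r\<close> a colinear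
  retraction of \<open>i\<close>. Then \<open>g0 = f \<circ> r\<close> is colinear but in general not \<open>A\<close>-linear, and the cointegral
  averages it into \<open>g(m) = \<Sum>\<^sub>b g0(m\<^sub>0 a\<^sub>b) \<gamma>\<^sub>X(a\<^sub>b\<^sup>* \<otimes> m\<^sub>1)\<close>, with \<open>a\<^sub>b\<close> a basis of \<open>A\<close>.
  Cointegral axiom (1) and coassociativity make \<open>g\<close> colinear, axiom (2) and the compatibility of
  action and coaction make it \<open>A\<close>-linear, and on the image of \<open>i\<close>, where \<open>g0\<close> is already \<open>A\<close>-linear,
  normalization (3) gives \<open>g \<circ> i = f\<close>. This is the Maschke property; semisimplicity is the
  special case \<open>f = id\<close>.
  All spaces are coordinate spaces \<open>FS B\<close>, and identities between linear maps are verified on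
  basis vectors.\<close>

section \<open>Linear algebra in coordinates\<close>

definition vlinear_on :: "'b set \<Rightarrow> (('b \<Rightarrow> 'k::field) \<Rightarrow> ('d \<Rightarrow> 'k)) \<Rightarrow> bool" where
  "vlinear_on B \<Phi> \<longleftrightarrow> (\<forall>f\<in>FS B. \<forall>g\<in>FS B. \<Phi> (vadd f g) = vadd (\<Phi> f) (\<Phi> g)) \<and>
     (\<forall>c. \<forall>f\<in>FS B. \<Phi> (vsmul c f) = vsmul c (\<Phi> f))"

definition maps_into :: "'b set \<Rightarrow> 'd set \<Rightarrow> (('b \<Rightarrow> 'k::zero) \<Rightarrow> ('d \<Rightarrow> 'k)) \<Rightarrow> bool" where
  "maps_into B D \<Phi> \<longleftrightarrow> (\<forall>f\<in>FS B. \<Phi> f \<in> FS D)"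

definition lin_ext :: "('b \<Rightarrow> 'd \<Rightarrow> 'k::comm_ring_1) \<Rightarrow> ('b \<Rightarrow> 'k) \<Rightarrow> ('d \<Rightarrow> 'k)" where
  "lin_ext F t = (\<lambda>x. \<Sum>p\<in>fsupp t. t p * F p x)"

definition vsum :: "'i set \<Rightarrow> ('i \<Rightarrow> 'b \<Rightarrow> 'k::comm_monoid_add) \<Rightarrow> ('b \<Rightarrow> 'k)" where
  "vsum S F = (\<lambda>x. \<Sum>i\<in>S. F i x)"

lemma linear_on_iff: "linear_on B D \<phi> \<longleftrightarrow> maps_into B D \<phi> \<and> vlinear_on B \<phi>"
  unfolding linear_on_def maps_into_def vlinear_on_def by blast

lemma FS_finite: "f \<in> FS B \<Longrightarrow> finite (fsupp f)"
  by (simp add: FS_def)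

lemma FS_fsupp_subset: "f \<in> FS B \<Longrightarrow> fsupp f \<subseteq> B"
  by (simp add: FS_def)

lemma fsupp_vadd: "fsupp (vadd f g :: _ \<Rightarrow> 'k::field) \<subseteq> fsupp f \<union> fsupp g"
  unfolding fsupp_def vadd_def by auto

lemma fsupp_vsmul: "fsupp (vsmul c f :: _ \<Rightarrow> 'k::field) \<subseteq> fsupp f"
  unfolding fsupp_def vsmul_def by auto

lemma vzero_FS [simp]: "(vzero :: _ \<Rightarrow> 'k::field) \<in> FS B"
  unfolding FS_def fsupp_def vzero_def by auto

lemma vadd_FS [simp, intro]: "(f :: _ \<Rightarrow> 'k::field) \<in> FS B \<Longrightarrow> g \<in> FS B \<Longrightarrow> vadd f g \<in> FS B"
  unfolding FS_def using fsupp_vadd[of f g] by (auto intro: finite_subset)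

lemma vsmul_FS [simp, intro]: "(f :: _ \<Rightarrow> 'k::field) \<in> FS B \<Longrightarrow> vsmul c f \<in> FS B"
  unfolding FS_def using fsupp_vsmul[of c f] by (auto intro: finite_subset)

lemma fsupp_bvec [simp]: "fsupp (bvec b :: 'b \<Rightarrow> 'k::field) = {b}"
  unfolding fsupp_def bvec_def by auto

lemma bvec_FS [simp]: "(bvec b :: 'b \<Rightarrow> 'k::field) \<in> FS B \<longleftrightarrow> b \<in> B"
  unfolding FS_def by simp

lemma fsupp_tens: "fsupp (tens u v :: _ \<Rightarrow> 'k::field) \<subseteq> fsupp u \<times> fsupp v"
  unfolding fsupp_def tens_def by auto

lemma tens_FS [simp, intro]:
  assumes "(u :: _ \<Rightarrow> 'k::field) \<in> FS B" and "v \<in> FS D"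
  shows "tens u v \<in> FS (B \<times> D)"
proof -
  have "finite (fsupp u \<times> fsupp v)" and "fsupp u \<times> fsupp v \<subseteq> B \<times> D"
    using assms by (auto simp: FS_def)
  then show ?thesis
    using fsupp_tens[of u v] by (auto simp: FS_def intro: finite_subset)
qed

lemma bvec_pair: "(bvec (x, y) :: _ \<Rightarrow> 'k::field) = tens (bvec x) (bvec y)"
  unfolding bvec_def tens_def by (auto simp: fun_eq_iff)

lemma vsum_insert: "finite S \<Longrightarrow> i \<notin> S \<Longrightarrow> vsum (insert i S) F = vadd (F i) (vsum S F)"
  by (simp add: vsum_def vadd_def)

lemma vsum_cong: "(\<And>i. i \<in> S \<Longrightarrow> F i = G i) \<Longrightarrow> vsum S F = vsum S G"
  unfolding vsum_def by (auto intro!: sum.cong)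

lemma vsum_FS [intro]:
  fixes F :: "'i \<Rightarrow> 'b \<Rightarrow> 'k::field"
  assumes "finite S" and "\<And>i. i \<in> S \<Longrightarrow> F i \<in> FS B"
  shows "vsum S F \<in> FS B"
  using assms by (induction S rule: finite_induct) (auto simp: vsum_insert, simp add: vsum_def flip: vzero_def)

lemma tens_vsum_left: "tens (vsum S (F :: _ \<Rightarrow> _ \<Rightarrow> 'k::field)) v = vsum S (\<lambda>i. tens (F i) v)"
  unfolding tens_def vsum_def by (auto simp: fun_eq_iff sum_distrib_right)

lemma assocr_vsum: "assocr (vsum S F) = vsum S (\<lambda>i. assocr (F i))"
  unfolding assocr_def vsum_def by (auto simp: fun_eq_iff)

lemma vlinear_on_vadd: "vlinear_on B \<Phi> \<Longrightarrow> f \<in> FS B \<Longrightarrow> g \<in> FS B \<Longrightarrow> \<Phi> (vadd f g) = vadd (\<Phi> f) (\<Phi> g)"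
  unfolding vlinear_on_def by blast

lemma vlinear_on_vsmul: "vlinear_on B \<Phi> \<Longrightarrow> f \<in> FS B \<Longrightarrow> \<Phi> (vsmul c f) = vsmul c (\<Phi> f)"
  unfolding vlinear_on_def by blast

lemma vlinear_on_vzero:
  fixes \<Phi> :: "('b \<Rightarrow> 'k::field) \<Rightarrow> ('d \<Rightarrow> 'k)"
  assumes "vlinear_on B \<Phi>"
  shows "\<Phi> vzero = vzero"
proof -
  have "\<Phi> (vsmul 0 vzero) = vsmul 0 (\<Phi> vzero)"
    using assms by (simp add: vlinear_on_vsmul)
  then show ?thesis by (simp add: vsmul_def vzero_def fun_eq_iff)
qed

lemma vlinear_on_vsum:
  fixes F :: "'i \<Rightarrow> 'b \<Rightarrow> 'k::field"
  assumes "vlinear_on B \<Phi>" and "finite S" and "\<And>i. i \<in> S \<Longrightarrow> F i \<in> FS B"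
  shows "\<Phi> (vsum S F) = vsum S (\<lambda>i. \<Phi> (F i))"
  using assms(2,3)
proof (induction S rule: finite_induct)
  case empty
  then show ?case using vlinear_on_vzero[OF assms(1)] by (simp add: vsum_def vzero_def)
next
  case (insert i S)
  then show ?case by (simp add: vsum_insert vlinear_on_vadd[OF assms(1)] vsum_FS)
qed

lemma maps_into_comp: "maps_into D E \<Phi> \<Longrightarrow> maps_into B D \<phi> \<Longrightarrow> maps_into B E (\<lambda>x. \<Phi> (\<phi> x))"
  unfolding maps_into_def by blast

lemma vlinear_on_comp:
  "vlinear_on D \<Phi> \<Longrightarrow> maps_into B D \<phi> \<Longrightarrow> vlinear_on B \<phi> \<Longrightarrow> vlinear_on B (\<lambda>x. \<Phi> (\<phi> x))"
  unfolding vlinear_on_def maps_into_def by auto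

lemma vlinear_on_id [simp]: "vlinear_on B (\<lambda>x. x)"
  unfolding vlinear_on_def by auto

lemma vlinear_on_tens_right [simp]: "vlinear_on B (tens u)"
  unfolding vlinear_on_def tens_def vadd_def vsmul_def by (auto simp: fun_eq_iff algebra_simps)

lemma vlinear_on_tens_left [simp]: "vlinear_on B (\<lambda>x. tens x v)"
  unfolding vlinear_on_def tens_def vadd_def vsmul_def by (auto simp: fun_eq_iff algebra_simps)

lemma vlinear_on_assocr [simp]: "vlinear_on B assocr"
  unfolding vlinear_on_def assocr_def vadd_def vsmul_def by (auto simp: fun_eq_iff)

lemma vlinear_on_assocl [simp]: "vlinear_on B assocl"
  unfolding vlinear_on_def assocl_def vadd_def vsmul_def by (auto simp: fun_eq_iff)

lemma vlinear_on_ins_mid [simp]: "vlinear_on B (ins_mid v)"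
  unfolding vlinear_on_def ins_mid_def vadd_def vsmul_def by (auto simp: fun_eq_iff algebra_simps)

lemma maps_into_tens_right: "u \<in> FS B \<Longrightarrow> maps_into D (B \<times> D) (tens (u :: _ \<Rightarrow> 'k::field))"
  unfolding maps_into_def by auto

lemma maps_into_tens_left: "v \<in> FS D \<Longrightarrow> maps_into B (B \<times> D) (\<lambda>x. tens x (v :: _ \<Rightarrow> 'k::field))"
  unfolding maps_into_def by auto

lemma lin_ext_superset:
  assumes "finite S" and "fsupp t \<subseteq> S"
  shows "lin_ext F t = (\<lambda>x. \<Sum>p\<in>S. t p * F p x)"
  unfolding lin_ext_def
  by (intro ext sum.mono_neutral_left[OF assms]) (auto simp: fsupp_def)

lemma vlinear_on_lin_ext [simp]:
  fixes F :: "'b \<Rightarrow> 'd \<Rightarrow> 'k::field"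
  shows "vlinear_on B (lin_ext F)"
  unfolding vlinear_on_def
proof (intro conjI ballI allI)
  fix f g :: "'b \<Rightarrow> 'k" assume "f \<in> FS B" and "g \<in> FS B"
  then have fin: "finite (fsupp f \<union> fsupp g)" by (simp add: FS_finite)
  have "lin_ext F h = (\<lambda>x. \<Sum>p\<in>fsupp f \<union> fsupp g. h p * F p x)" if "h \<in> {f, g, vadd f g}" for h
    using that fsupp_vadd[of f g] by (intro lin_ext_superset[OF fin]) auto
  then show "lin_ext F (vadd f g) = vadd (lin_ext F f) (lin_ext F g)"
    by (simp add: vadd_def distrib_right sum.distrib)
next
  fix c and f :: "'b \<Rightarrow> 'k" assume "f \<in> FS B"
  then have "lin_ext F (vsmul c f) = (\<lambda>x. \<Sum>p\<in>fsupp f. vsmul c f p * F p x)"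
    by (intro lin_ext_superset fsupp_vsmul) (simp add: FS_finite)
  then show "lin_ext F (vsmul c f) = vsmul c (lin_ext F f)"
    by (simp add: vsmul_def lin_ext_def sum_distrib_left mult.assoc)
qed

lemma lin_ext_bvec [simp]: "lin_ext F (bvec b :: _ \<Rightarrow> 'k::field) = F b"
  by (simp only: lin_ext_def fsupp_bvec) (simp add: bvec_def)

lemma maps_into_lin_ext:
  fixes F :: "'b \<Rightarrow> 'd \<Rightarrow> 'k::field"
  assumes "\<And>p. p \<in> B \<Longrightarrow> F p \<in> FS D"
  shows "maps_into B D (lin_ext F)"
  unfolding maps_into_def
proof
  fix t :: "'b \<Rightarrow> 'k" assume t: "t \<in> FS B"
  have "lin_ext F t = vsum (fsupp t) (\<lambda>p. vsmul (t p) (F p))"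
    unfolding lin_ext_def vsum_def vsmul_def by simp
  also have "\<dots> \<in> FS D"
    using t assms by (intro vsum_FS vsmul_FS) (auto simp: FS_def)
  finally show "lin_ext F t \<in> FS D" .
qed

lemma lin_ext_cong:
  assumes "(t :: _ \<Rightarrow> 'k::field) \<in> FS B" and "\<And>p. p \<in> B \<Longrightarrow> F p = G p"
  shows "lin_ext F t = lin_ext G t"
  using assms FS_fsupp_subset[OF assms(1)] unfolding lin_ext_def by (intro ext sum.cong) auto

lemma vlinear_on_eq_lin_ext:
  assumes "vlinear_on B \<Phi>" and "(t :: _ \<Rightarrow> 'k::field) \<in> FS B"
  shows "\<Phi> t = lin_ext (\<lambda>p. \<Phi> (bvec p)) t"
proof -
  have "\<Phi> t = lin_ext (\<lambda>p. \<Phi> (bvec p)) t" if "finite S" "t \<in> FS B" "fsupp t = S" for S t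
    using that
  proof (induction S arbitrary: t rule: finite_induct)
    case empty
    then have "t = vzero" by (auto simp: fsupp_def vzero_def fun_eq_iff)
    then show ?case
      using vlinear_on_vzero[OF assms(1)] by (simp add: lin_ext_def fsupp_def vzero_def)
  next
    case (insert p S)
    define t' where "t' = t(p := 0)"
    have p: "p \<in> B" using insert.prems by (auto simp: FS_def)
    have S: "fsupp t' = S"
      using insert unfolding t'_def fsupp_def by auto
    then have t': "t' \<in> FS B" "fsupp t' = S"
      using insert by (auto simp: FS_def)
    have t: "t = vadd t' (vsmul (t p) (bvec p))"
      unfolding t'_def vadd_def vsmul_def bvec_def by (auto simp: fun_eq_iff)
    show ?case
      using insert.IH[OF t'] t' p
      by (subst (1 2) t) (simp add: vlinear_on_vadd[OF assms(1)] vlinear_on_vsmul[OF assms(1)]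
          vlinear_on_vadd[OF vlinear_on_lin_ext] vlinear_on_vsmul[OF vlinear_on_lin_ext])
  qed
  then show ?thesis using assms(2) FS_finite by blast
qed

lemma vlinear_on_eq_basis:
  assumes "vlinear_on B \<Phi>" and "vlinear_on B \<Psi>"
    and "\<And>b. b \<in> B \<Longrightarrow> \<Phi> (bvec b) = \<Psi> (bvec b)" and "(t :: _ \<Rightarrow> 'k::field) \<in> FS B"
  shows "\<Phi> t = \<Psi> t"
  using vlinear_on_eq_lin_ext[OF assms(1,4)] vlinear_on_eq_lin_ext[OF assms(2,4)]
    lin_ext_cong[OF assms(4), of "\<lambda>p. \<Phi> (bvec p)" "\<lambda>p. \<Psi> (bvec p)"] assms(3)
  by simp

lemma vlinear_on_tens_right_comp: "vlinear_on B \<phi> \<Longrightarrow> vlinear_on B (\<lambda>x. tens u (\<phi> x))"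
  unfolding vlinear_on_def tens_def vadd_def vsmul_def by (simp add: fun_eq_iff algebra_simps)

lemma vlinear_on_tens_left_comp: "vlinear_on B \<phi> \<Longrightarrow> vlinear_on B (\<lambda>x. tens (\<phi> x) v)"
  unfolding vlinear_on_def tens_def vadd_def vsmul_def by (simp add: fun_eq_iff algebra_simps)

lemma vlinear_on_assocl_comp: "vlinear_on B \<phi> \<Longrightarrow> vlinear_on B (\<lambda>x. assocl (\<phi> x))"
  unfolding vlinear_on_def assocl_def vadd_def vsmul_def by (simp add: fun_eq_iff)

lemma vlinear_on_assocr_comp: "vlinear_on B \<phi> \<Longrightarrow> vlinear_on B (\<lambda>x. assocr (\<phi> x))"
  unfolding vlinear_on_def assocr_def vadd_def vsmul_def by (simp add: fun_eq_iff)

lemma tmap_lin_ext: "tmap \<phi> \<chi> = lin_ext (\<lambda>p. tens (\<phi> (bvec (fst p))) (\<chi> (bvec (snd p))))"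
  by (intro ext) (auto simp: tmap_def lin_ext_def tens_def split: prod.splits)

lemma vlinear_on_tmap [simp]: "vlinear_on B (tmap \<phi> \<chi>)"
  unfolding tmap_lin_ext by (rule vlinear_on_lin_ext)

lemma tmap_bvec:
  fixes \<phi> :: "('b \<Rightarrow> 'k::field) \<Rightarrow> ('d \<Rightarrow> 'k)"
  shows "tmap \<phi> \<chi> (bvec (b, e)) = tens (\<phi> (bvec b)) (\<chi> (bvec e))"
  unfolding tmap_lin_ext by simp

lemma maps_into_tmap:
  fixes \<phi> :: "('b \<Rightarrow> 'k::field) \<Rightarrow> ('d \<Rightarrow> 'k)"
  shows "maps_into B D \<phi> \<Longrightarrow> maps_into E G \<chi> \<Longrightarrow> maps_into (B \<times> E) (D \<times> G) (tmap \<phi> \<chi>)"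
  unfolding tmap_lin_ext by (rule maps_into_lin_ext) (auto simp: maps_into_def)

lemma tmap_cong:
  fixes \<phi> :: "('b \<Rightarrow> 'k::field) \<Rightarrow> ('d \<Rightarrow> 'k)"
  assumes "t \<in> FS (B \<times> E)"
    and "\<And>b. b \<in> B \<Longrightarrow> \<phi> (bvec b) = \<phi>' (bvec b)" and "\<And>e. e \<in> E \<Longrightarrow> \<chi> (bvec e) = \<chi>' (bvec e)"
  shows "tmap \<phi> \<chi> t = tmap \<phi>' \<chi>' t"
  unfolding tmap_lin_ext using assms by (intro lin_ext_cong[OF assms(1)]) auto

lemma tmap_tens:
  fixes \<phi> :: "('b \<Rightarrow> 'k::field) \<Rightarrow> ('d \<Rightarrow> 'k)"
  assumes \<phi>: "vlinear_on B \<phi>" and \<chi>: "vlinear_on E \<chi>" and u: "u \<in> FS B" and v: "v \<in> FS E"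
  shows "tmap \<phi> \<chi> (tens u v) = tens (\<phi> u) (\<chi> v)"
proof -
  have "tmap \<phi> \<chi> (tens (bvec b) v) = tens (\<phi> (bvec b)) (\<chi> v)" for b
  proof (rule vlinear_on_eq_basis[where \<Phi>="\<lambda>v. tmap \<phi> \<chi> (tens (bvec b) v)"
        and \<Psi>="\<lambda>v. tens (\<phi> (bvec b)) (\<chi> v)", OF _ _ _ v])
    show "vlinear_on E (\<lambda>v. tmap \<phi> \<chi> (tens (bvec b) v))"
      by (rule vlinear_on_comp[OF vlinear_on_tmap maps_into_tens_right[of _ "{b}"]]) simp_all
  qed (simp_all add: \<chi> vlinear_on_tens_right_comp tmap_bvec flip: bvec_pair)
  then show ?thesis
    by (intro vlinear_on_eq_basis[where \<Phi>="\<lambda>u. tmap \<phi> \<chi> (tens u v)" and \<Psi>="\<lambda>u. tens (\<phi> u) (\<chi> v)", OF _ _ _ u]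
        vlinear_on_comp[OF vlinear_on_tmap maps_into_tens_left[OF v]] vlinear_on_tens_left_comp \<phi>) simp_all
qed

lemma tmap_comp:
  fixes \<phi> :: "('b \<Rightarrow> 'k::field) \<Rightarrow> ('d \<Rightarrow> 'k)"
  assumes "maps_into B D \<phi>" and "maps_into E G \<chi>" and "vlinear_on D \<phi>'" and "vlinear_on G \<chi>'"
    and t: "t \<in> FS (B \<times> E)"
  shows "tmap \<phi>' \<chi>' (tmap \<phi> \<chi> t) = tmap (\<lambda>x. \<phi>' (\<phi> x)) (\<lambda>x. \<chi>' (\<chi> x)) t"
  using assms(1-4)
  by (intro vlinear_on_eq_basis[where \<Phi>="\<lambda>t. tmap \<phi>' \<chi>' (tmap \<phi> \<chi> t)", OF _ _ _ t]
      vlinear_on_comp[OF vlinear_on_tmap maps_into_tmap])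
    (auto simp: tmap_bvec maps_into_def intro!: tmap_tens)

lemma tmap_id: "(t :: _ \<Rightarrow> 'k::field) \<in> FS (B \<times> E) \<Longrightarrow> tmap (\<lambda>x. x) (\<lambda>x. x) t = t"
  by (rule vlinear_on_eq_basis[where B="B \<times> E"]) (auto simp: tmap_bvec simp flip: bvec_pair)

lemma assocr_FS [intro]: "t \<in> FS ((B \<times> E) \<times> F) \<Longrightarrow> assocr (t :: _ \<Rightarrow> 'k::field) \<in> FS (B \<times> (E \<times> F))"
proof -
  have "fsupp (assocr t) = (\<lambda>((x, y), z). (x, (y, z))) ` fsupp t"
    unfolding fsupp_def assocr_def by (auto simp: image_iff split: prod.splits)
  then show "t \<in> FS ((B \<times> E) \<times> F) \<Longrightarrow> assocr t \<in> FS (B \<times> (E \<times> F))"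
    by (auto simp: FS_def)
qed

lemma assocl_FS [intro]: "t \<in> FS (B \<times> (E \<times> F)) \<Longrightarrow> assocl (t :: _ \<Rightarrow> 'k::field) \<in> FS ((B \<times> E) \<times> F)"
proof -
  have "fsupp (assocl t) = (\<lambda>(x, (y, z)). ((x, y), z)) ` fsupp t"
    unfolding fsupp_def assocl_def by (auto simp: image_iff split: prod.splits)
  then show "t \<in> FS (B \<times> (E \<times> F)) \<Longrightarrow> assocl t \<in> FS ((B \<times> E) \<times> F)"
    by (auto simp: FS_def)
qed

lemma assocl_assocr [simp]: "assocl (assocr t) = t"
  unfolding assocl_def assocr_def by (auto simp: fun_eq_iff)

lemma assocr_tens [simp]: "assocr (tens (tens (u :: _ \<Rightarrow> 'k::field) v) w) = tens u (tens v w)"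
  unfolding assocr_def tens_def by (auto simp: fun_eq_iff mult.assoc)

lemma assocl_tens [simp]: "assocl (tens (u :: _ \<Rightarrow> 'k::field) (tens v w)) = tens (tens u v) w"
  unfolding assocl_def tens_def by (auto simp: fun_eq_iff mult.assoc)

lemma assocl_tens_eq_tmap:
  assumes "(w :: _ \<Rightarrow> 'k::field) \<in> FS (E \<times> F)"
  shows "assocl (tens u w) = tmap (tens u) (\<lambda>x. x) w"
proof (rule vlinear_on_eq_basis[where \<Phi>="\<lambda>w. assocl (tens u w)", OF _ _ _ assms])
  fix b assume "b \<in> E \<times> F"
  then show "assocl (tens u (bvec b)) = tmap (tens u) (\<lambda>x. x) (bvec b)"
    by (cases b) (simp only: tmap_bvec, simp add: bvec_pair)
qed (simp_all add: vlinear_on_assocl_comp)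

lemma assocr_tens_eq_tmap:
  assumes "(w :: _ \<Rightarrow> 'k::field) \<in> FS (B \<times> E)"
  shows "assocr (tens w v) = tmap (\<lambda>x. x) (\<lambda>x. tens x v) w"
proof (rule vlinear_on_eq_basis[where \<Phi>="\<lambda>w. assocr (tens w v)", OF _ _ _ assms])
  fix b assume "b \<in> B \<times> E"
  then show "assocr (tens (bvec b) v) = tmap (\<lambda>x. x) (\<lambda>x. tens x v) (bvec b)"
    by (cases b) (simp only: tmap_bvec, simp add: bvec_pair)
qed (simp_all add: vlinear_on_assocr_comp)

lemma coev_eq_vsum:
  assumes "finite BA"
  shows "(coev BA :: _ \<Rightarrow> 'k::field) = vsum BA (\<lambda>b. tens (bvec b) (bvec b))"
proof -
  have "(\<Sum>i\<in>BA. (if x = i then 1 else 0) * (if y = i then 1 else 0)) =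
        (if x = y \<and> x \<in> BA then 1 else (0::'k))" for x y
    using assms by (simp add: if_distrib[of "\<lambda>c. c * _"] sum.delta cong: if_cong)
  then show ?thesis
    by (auto simp: fun_eq_iff coev_def vsum_def tens_def bvec_def)
qed

lemma coev_FS: "finite BA \<Longrightarrow> (coev BA :: _ \<Rightarrow> 'k::field) \<in> FS (BA \<times> BA)"
  by (simp add: coev_eq_vsum vsum_FS)

lemma ins_mid_coev_tens:
  assumes "finite BA"
  shows "ins_mid (coev BA :: _ \<Rightarrow> 'k::field) (tens s1 s2) = vsum BA (\<lambda>b. tens (tens s1 (bvec b)) (tens (bvec b) s2))"
  unfolding coev_eq_vsum[OF assms] ins_mid_def vsum_def tens_def by (auto simp: fun_eq_iff sum_distrib_left mult_ac)

lemma econtr_r_lin_ext: "econtr_r e = lin_ext (\<lambda>p. vsmul (e (bvec (snd p))) (bvec (fst p)))"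
  by (intro ext) (auto simp: econtr_r_def lin_ext_def vsmul_def bvec_def intro!: sum.cong)

lemma linear_on_imp_vlinear_on: "linear_on B D \<phi> \<Longrightarrow> vlinear_on B \<phi>"
  unfolding linear_on_iff by blast

lemma linear_on_imp_maps_into: "linear_on B D \<phi> \<Longrightarrow> maps_into B D \<phi>"
  unfolding linear_on_iff by blast

lemma linear_on_FS: "linear_on B D \<phi> \<Longrightarrow> x \<in> FS B \<Longrightarrow> \<phi> x \<in> FS D"
  unfolding linear_on_def by blast

lemma linear_on_comp: "linear_on D E \<Phi> \<Longrightarrow> linear_on B D \<phi> \<Longrightarrow> linear_on B E (\<lambda>x. \<Phi> (\<phi> x))"
  unfolding linear_on_iff using maps_into_comp vlinear_on_comp by blast

lemma linear_on_id: "linear_on B B (\<lambda>x. x :: _ \<Rightarrow> 'k::field)"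
  unfolding linear_on_iff maps_into_def by auto

lemma linear_on_tmap:
  fixes \<phi> :: "('b \<Rightarrow> 'k::field) \<Rightarrow> ('d \<Rightarrow> 'k)"
  shows "linear_on B D \<phi> \<Longrightarrow> linear_on E G \<chi> \<Longrightarrow> linear_on (B \<times> E) (D \<times> G) (tmap \<phi> \<chi>)"
  unfolding linear_on_iff using maps_into_tmap by auto

lemma linear_on_assocr: "linear_on ((B \<times> E) \<times> F) (B \<times> (E \<times> F)) (assocr :: _ \<Rightarrow> _ \<Rightarrow> 'k::field)"
  unfolding linear_on_iff maps_into_def by auto

lemma linear_on_assocl: "linear_on (B \<times> (E \<times> F)) ((B \<times> E) \<times> F) (assocl :: _ \<Rightarrow> _ \<Rightarrow> 'k::field)"
  unfolding linear_on_iff maps_into_def by auto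

lemma linear_on_tens_right: "u \<in> FS B \<Longrightarrow> linear_on D (B \<times> D) (tens (u :: _ \<Rightarrow> 'k::field))"
  unfolding linear_on_iff using maps_into_tens_right by auto

lemma linear_on_tens_left: "v \<in> FS D \<Longrightarrow> linear_on B (B \<times> D) (\<lambda>x. tens x (v :: _ \<Rightarrow> 'k::field))"
  unfolding linear_on_iff using maps_into_tens_left by auto

lemma linear_on_lin_ext:
  fixes F :: "'b \<Rightarrow> 'd \<Rightarrow> 'k::field"
  shows "(\<And>p. p \<in> B \<Longrightarrow> F p \<in> FS D) \<Longrightarrow> linear_on B D (lin_ext F)"
  unfolding linear_on_iff using maps_into_lin_ext by auto

lemma linear_on_ins_mid:
  assumes "(v :: _ \<Rightarrow> 'k::field) \<in> FS (A1 \<times> A2)"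
  shows "linear_on (C1 \<times> C2) ((C1 \<times> A1) \<times> (A2 \<times> C2)) (ins_mid v)"
  unfolding linear_on_iff maps_into_def
proof (intro conjI ballI vlinear_on_ins_mid)
  fix s :: "_ \<Rightarrow> 'k" assume s: "s \<in> FS (C1 \<times> C2)"
  let ?S = "(\<lambda>((c1, c2), (a, b)). ((c1, a), (b, c2))) ` (fsupp s \<times> fsupp v)"
  have "fsupp (ins_mid v s) \<subseteq> ?S"
    unfolding fsupp_def ins_mid_def by (auto simp: image_iff)
  moreover have "finite ?S" and "?S \<subseteq> (C1 \<times> A1) \<times> (A2 \<times> C2)"
    using s assms by (auto simp: FS_def)
  ultimately show "ins_mid v s \<in> FS ((C1 \<times> A1) \<times> (A2 \<times> C2))"
    unfolding FS_def by (auto intro: finite_subset)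
qed

lemma vlinear_on_lin_ext_param:
  fixes F :: "('e \<Rightarrow> 'k::field) \<Rightarrow> 'b \<Rightarrow> 'd \<Rightarrow> 'k"
  assumes "\<And>p. p \<in> B \<Longrightarrow> vlinear_on D (\<lambda>w. F w p)" and "(s :: 'b \<Rightarrow> 'k) \<in> FS B"
  shows "vlinear_on D (\<lambda>w. lin_ext (F w) s)"
proof -
  have lin: "vlinear_on D (\<lambda>w. F w p)" if "p \<in> fsupp s" for p
    using that assms FS_fsupp_subset by blast
  show ?thesis
    unfolding vlinear_on_def
  proof (intro conjI ballI allI)
    fix f g :: "'e \<Rightarrow> 'k" assume "f \<in> FS D" "g \<in> FS D"
    then have "\<And>p. p \<in> fsupp s \<Longrightarrow> F (vadd f g) p = vadd (F f p) (F g p)"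
      using lin vlinear_on_vadd by blast
    then show "lin_ext (F (vadd f g)) s = vadd (lin_ext (F f) s) (lin_ext (F g) s)"
      unfolding lin_ext_def vadd_def by (auto simp: fun_eq_iff distrib_left sum.distrib intro!: sum.cong)
  next
    fix c and f :: "'e \<Rightarrow> 'k" assume "f \<in> FS D"
    then have "\<And>p. p \<in> fsupp s \<Longrightarrow> F (vsmul c f) p = vsmul c (F f p)"
      using lin vlinear_on_vsmul by blast
    then show "lin_ext (F (vsmul c f)) s = vsmul c (lin_ext (F f) s)"
      unfolding lin_ext_def vsmul_def by (auto simp: fun_eq_iff sum_distrib_left mult_ac intro!: sum.cong)
  qed
qed

lemma tmap_vsum_tens:
  assumes "vlinear_on B \<phi>" and "vlinear_on E \<chi>" and "finite S"
    and "\<And>i. i \<in> S \<Longrightarrow> F i \<in> FS B" and "\<And>i. i \<in> S \<Longrightarrow> G i \<in> FS E"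
  shows "tmap \<phi> \<chi> (vsum S (\<lambda>i. tens (F i) (G i))) = vsum S (\<lambda>i. tens (\<phi> (F i)) (\<chi> (G i)))"
  using assms
  by (subst vlinear_on_vsum[OF vlinear_on_tmap, where B="B \<times> E"]) (auto intro!: vsum_cong tmap_tens)

text \<open>The right \<open>A\<close>-action \<open>(m \<otimes> f) a = m a\<^sub>\<psi> \<otimes> f\<^sup>\<psi>\<close> on \<open>M(Y) \<otimes> C(X,Y)\<close>.\<close>

definition ent_act ::
  "(('c \<times> 'a \<Rightarrow> 'k::field) \<Rightarrow> ('a \<times> 'c \<Rightarrow> 'k)) \<Rightarrow> (('m \<times> 'a \<Rightarrow> 'k) \<Rightarrow> ('m \<Rightarrow> 'k))
   \<Rightarrow> ('m \<times> 'c \<Rightarrow> 'k) \<Rightarrow> ('a \<Rightarrow> 'k) \<Rightarrow> ('m \<times> 'c \<Rightarrow> 'k)" where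
  "ent_act \<psi> act s a = tmap act (\<lambda>x. x) (assocl (tmap (\<lambda>x. x) \<psi> (assocr (tens s a))))"

lemma ent_act_linear:
  assumes \<psi>: "linear_on (C \<times> BA) (BA \<times> C) \<psi>"
    and act: "linear_on (M \<times> BA) M act" and a: "(a :: _ \<Rightarrow> 'k::field) \<in> FS BA"
  shows "linear_on (M \<times> C) (M \<times> C) (\<lambda>s. ent_act \<psi> act s a)"
  unfolding ent_act_def
  by (rule linear_on_comp[OF linear_on_tmap[OF act linear_on_id] linear_on_comp[OF linear_on_assocl
        linear_on_comp[OF linear_on_tmap[OF linear_on_id \<psi>] linear_on_comp[OF linear_on_assocr linear_on_tens_left[OF a]]]]])

lemma ent_act_tens:
  assumes \<psi>: "linear_on (C \<times> BA) (BA \<times> C) \<psi>"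
    and act: "linear_on (M \<times> BA) M act"
    and m: "(m :: _ \<Rightarrow> 'k::field) \<in> FS M" and d: "d \<in> FS C" and a: "a \<in> FS BA"
  shows "ent_act \<psi> act (tens m d) a = tmap (\<lambda>x. act (tens m x)) (\<lambda>x. x) (\<psi> (tens d a))"
proof -
  have w: "\<psi> (tens d a) \<in> FS (BA \<times> C)"
    using d a by (intro linear_on_FS[OF \<psi>]) auto
  have "tmap (\<lambda>x. x) \<psi> (tens m (tens d a)) = tens m (\<psi> (tens d a))"
    using m d a by (intro tmap_tens[OF vlinear_on_id linear_on_imp_vlinear_on[OF \<psi>]]) auto
  then show ?thesis
    unfolding ent_act_def
    by (simp add: assocl_tens_eq_tmap[OF w] tmap_comp[OF linear_on_imp_maps_into[OF linear_on_tens_right[OF m]]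
          linear_on_imp_maps_into[OF linear_on_id] linear_on_imp_vlinear_on[OF act] vlinear_on_id w])
qed

locale comodA_module =
  fixes Ob :: "'o set" and Cb :: "'o \<Rightarrow> 'o \<Rightarrow> 'c set"
    and \<delta> :: "'o \<Rightarrow> 'o \<Rightarrow> 'o \<Rightarrow> ('c \<Rightarrow> 'k::field) \<Rightarrow> ('c \<times> 'c \<Rightarrow> 'k)"
    and \<epsilon> :: "'o \<Rightarrow> ('c \<Rightarrow> 'k) \<Rightarrow> 'k"
    and BA :: "'a set" and mu :: "('a \<times> 'a \<Rightarrow> 'k) \<Rightarrow> ('a \<Rightarrow> 'k)" and one :: "'a \<Rightarrow> 'k"
    and \<psi> :: "'o \<Rightarrow> 'o \<Rightarrow> ('c \<times> 'a \<Rightarrow> 'k) \<Rightarrow> ('a \<times> 'c \<Rightarrow> 'k)"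
    and BM :: "'o \<Rightarrow> 'm set" and \<rho> :: "'o \<Rightarrow> 'o \<Rightarrow> ('m \<Rightarrow> 'k) \<Rightarrow> ('m \<times> 'c \<Rightarrow> 'k)"
    and act :: "'o \<Rightarrow> ('m \<times> 'a \<Rightarrow> 'k) \<Rightarrow> ('m \<Rightarrow> 'k)"
  assumes comodA: "comodA Ob Cb \<delta> \<epsilon> BA mu one \<psi> BM \<rho> act"
begin

lemma coaction_linear: "X \<in> Ob \<Longrightarrow> Y \<in> Ob \<Longrightarrow> linear_on (BM X) (BM Y \<times> Cb X Y) (\<rho> X Y)"
  using comodA unfolding comodA_def comod_def by blast

lemma action_linear: "X \<in> Ob \<Longrightarrow> linear_on (BM X \<times> BA) (BM X) (act X)"
  using comodA unfolding comodA_def by blast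

lemma action_assoc:
  "X \<in> Ob \<Longrightarrow> t \<in> FS ((BM X \<times> BA) \<times> BA) \<Longrightarrow>
    act X (tmap (act X) (\<lambda>x. x) t) = act X (tmap (\<lambda>x. x) mu (assocr t))"
  using comodA unfolding comodA_def id_def by blast

lemma action_unit: "X \<in> Ob \<Longrightarrow> m \<in> FS (BM X) \<Longrightarrow> act X (tens m one) = m"
  using comodA unfolding comodA_def by blast

lemma coaction_action:
  "X \<in> Ob \<Longrightarrow> Y \<in> Ob \<Longrightarrow> t \<in> FS (BM X \<times> BA) \<Longrightarrow>
    \<rho> X Y (act X t) =
    tmap (act Y) (\<lambda>x. x) (assocl (tmap (\<lambda>x. x) (\<psi> X Y) (assocr (tmap (\<rho> X Y) (\<lambda>x. x) t))))"
  using comodA unfolding comodA_def id_def by blast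

lemma coaction_action_tens:
  assumes "X \<in> Ob" and "Y \<in> Ob" and "m \<in> FS (BM X)" and "a \<in> FS BA"
  shows "\<rho> X Y (act X (tens m a)) = ent_act (\<psi> X Y) (act Y) (\<rho> X Y m) a"
  using assms
  by (simp add: coaction_action ent_act_def tmap_tens[OF linear_on_imp_vlinear_on[OF coaction_linear] vlinear_on_id])

lemma coassoc:
  "X \<in> Ob \<Longrightarrow> Y \<in> Ob \<Longrightarrow> Z \<in> Ob \<Longrightarrow> m \<in> FS (BM X) \<Longrightarrow>
    assocr (tmap (\<rho> Z Y) (\<lambda>x. x) (\<rho> X Z m)) = tmap (\<lambda>x. x) (\<delta> X Z Y) (\<rho> X Y m)"
  using comodA unfolding comodA_def comod_def id_def by blast

lemma counit: "X \<in> Ob \<Longrightarrow> m \<in> FS (BM X) \<Longrightarrow> econtr_r (\<epsilon> X) (\<rho> X X m) = m"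
  using comodA unfolding comodA_def comod_def by blast

lemma action_tens_assoc:
  assumes mu: "linear_on (BA \<times> BA) BA mu"
    and X: "X \<in> Ob" and n: "n \<in> FS (BM X)" and x: "x \<in> FS BA" and y: "y \<in> FS BA"
  shows "act X (tens (act X (tens n x)) y) = act X (tens n (mu (tens x y)))"
proof -
  have "act X (tens (act X (tens n x)) y) = act X (tmap (act X) (\<lambda>x. x) (tens (tens n x) y))"
    using assms by (simp add: tmap_tens[OF linear_on_imp_vlinear_on[OF action_linear[OF X]]])
  also have "\<dots> = act X (tmap (\<lambda>x. x) mu (tens n (tens x y)))"
    using assms by (simp add: action_assoc)
  also have "\<dots> = act X (tens n (mu (tens x y)))"
    using assms by (simp add: tmap_tens[OF vlinear_on_id linear_on_imp_vlinear_on[OF mu]])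
  finally show ?thesis .
qed

end

lemma comod_hom_linear: "comod_hom Ob Cb BM \<rho>M BN \<rho>N \<phi> \<Longrightarrow> X \<in> Ob \<Longrightarrow> linear_on (BM X) (BN X) (\<phi> X)"
  unfolding comod_hom_def by blast

lemma comod_hom_coaction:
  "comod_hom Ob Cb BM \<rho>M BN \<rho>N \<phi> \<Longrightarrow> X \<in> Ob \<Longrightarrow> Y \<in> Ob \<Longrightarrow> m \<in> FS (BM X) \<Longrightarrow>
    \<rho>N X Y (\<phi> X m) = tmap (\<phi> Y) (\<lambda>x. x) (\<rho>M X Y m)"
  unfolding comod_hom_def id_def by blast

lemma comodA_hom_comod_hom:
  "comodA_hom Ob Cb BA BM \<rho>M actM BN \<rho>N actN \<phi> \<Longrightarrow> comod_hom Ob Cb BM \<rho>M BN \<rho>N \<phi>"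
  unfolding comodA_hom_def by blast

lemma comodA_hom_action_tens:
  assumes h: "comodA_hom Ob Cb BA BM \<rho>M actM BN \<rho>N actN \<phi>"
    and X: "X \<in> Ob" and u: "u \<in> FS (BM X)" and a: "a \<in> FS BA"
  shows "\<phi> X (actM X (tens u a)) = actN X (tens (\<phi> X u) a)"
proof -
  have "\<phi> X (actM X (tens u a)) = actN X (tmap (\<phi> X) (\<lambda>x. x) (tens u a))"
    using h X u a unfolding comodA_hom_def id_def by blast
  also have "\<dots> = actN X (tens (\<phi> X u) a)"
    using u a
    by (simp add: tmap_tens[OF linear_on_imp_vlinear_on[OF comod_hom_linear[OF comodA_hom_comod_hom[OF h] X]]])
  finally show ?thesis .
qed

lemma comod_hom_comp:
  fixes \<phi> :: "'o \<Rightarrow> ('m1 \<Rightarrow> 'k::field) \<Rightarrow> ('m2 \<Rightarrow> 'k)" and \<chi> :: "'o \<Rightarrow> ('m2 \<Rightarrow> 'k) \<Rightarrow> ('m3 \<Rightarrow> 'k)"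
  assumes M: "comodA_module Ob Cb \<delta> \<epsilon> BA mu one \<psi> B1 \<rho>1 act1"
    and \<phi>: "comod_hom Ob Cb B1 \<rho>1 B2 \<rho>2 \<phi>" and \<chi>: "comod_hom Ob Cb B2 \<rho>2 B3 \<rho>3 \<chi>"
  shows "comod_hom Ob Cb B1 \<rho>1 B3 \<rho>3 (\<lambda>X m. \<chi> X (\<phi> X m))"
  unfolding comod_hom_def
proof (intro conjI ballI)
  fix X assume X: "X \<in> Ob"
  show "linear_on (B1 X) (B3 X) (\<lambda>m. \<chi> X (\<phi> X m))"
    by (rule linear_on_comp[OF comod_hom_linear[OF \<chi> X] comod_hom_linear[OF \<phi> X]])
  fix Y and m :: "'m1 \<Rightarrow> 'k" assume Y: "Y \<in> Ob" and m: "m \<in> FS (B1 X)"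
  have "\<rho>3 X Y (\<chi> X (\<phi> X m)) = tmap (\<chi> Y) (\<lambda>x. x) (tmap (\<phi> Y) (\<lambda>x. x) (\<rho>1 X Y m))"
    using comod_hom_linear[OF \<phi> X] m
    by (simp add: comod_hom_coaction[OF \<chi> X Y] comod_hom_coaction[OF \<phi> X Y] linear_on_FS)
  also have "\<dots> = tmap (\<lambda>m. \<chi> Y (\<phi> Y m)) (\<lambda>x. x) (\<rho>1 X Y m)"
    by (rule tmap_comp[OF linear_on_imp_maps_into[OF comod_hom_linear[OF \<phi> Y]] linear_on_imp_maps_into[OF linear_on_id]
          linear_on_imp_vlinear_on[OF comod_hom_linear[OF \<chi> Y]] vlinear_on_id
          linear_on_FS[OF comodA_module.coaction_linear[OF M X Y] m]])
  finally show "\<rho>3 X Y (\<chi> X (\<phi> X m)) = tmap (\<lambda>m. \<chi> Y (\<phi> Y m)) id (\<rho>1 X Y m)"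
    by (simp add: id_def)
qed

lemma comodA_hom_id:
  assumes M: "comodA_module Ob Cb \<delta> \<epsilon> BA mu one \<psi> BM \<rho> act"
  shows "comodA_hom Ob Cb BA BM \<rho> act BM \<rho> act (\<lambda>X m. m)"
  unfolding comodA_hom_def comod_hom_def id_def
  using linear_on_id tmap_id linear_on_FS[OF comodA_module.coaction_linear[OF M]] by metis

section \<open>Averaging with a normalized cointegral\<close>

locale cointegral_setting =
  fixes Ob :: "'o set" and Cb :: "'o \<Rightarrow> 'o \<Rightarrow> 'c set"
    and \<delta> :: "'o \<Rightarrow> 'o \<Rightarrow> 'o \<Rightarrow> ('c \<Rightarrow> 'k::field) \<Rightarrow> ('c \<times> 'c \<Rightarrow> 'k)"
    and \<epsilon> :: "'o \<Rightarrow> ('c \<Rightarrow> 'k) \<Rightarrow> 'k"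
    and BA :: "'a set" and mu :: "('a \<times> 'a \<Rightarrow> 'k) \<Rightarrow> ('a \<Rightarrow> 'k)" and one :: "'a \<Rightarrow> 'k"
    and \<psi> :: "'o \<Rightarrow> 'o \<Rightarrow> ('c \<times> 'a \<Rightarrow> 'k) \<Rightarrow> ('a \<times> 'c \<Rightarrow> 'k)"
    and \<gamma> :: "'o \<Rightarrow> ('a \<times> 'c \<Rightarrow> 'k) \<Rightarrow> ('a \<Rightarrow> 'k)"
  assumes coalg: "coalg_so Ob Cb \<delta> \<epsilon>"
    and alg: "kalg BA mu one"
    and finite_BA: "finite BA"
    and ent: "entwining Ob Cb \<delta> \<epsilon> BA mu one \<psi>"
    and cointegral: "norm_cointegral Ob Cb \<delta> \<epsilon> BA mu one \<psi> \<gamma>"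
begin

lemma \<delta>_linear: "X \<in> Ob \<Longrightarrow> Y \<in> Ob \<Longrightarrow> Z \<in> Ob \<Longrightarrow> linear_on (Cb X Z) (Cb Y Z \<times> Cb X Y) (\<delta> X Y Z)"
  using coalg unfolding coalg_so_def by blast

lemma mu_linear: "linear_on (BA \<times> BA) BA mu"
  using alg unfolding kalg_def by blast

lemma one_FS: "one \<in> FS BA"
  using alg unfolding kalg_def by blast

lemma \<psi>_linear: "X \<in> Ob \<Longrightarrow> Y \<in> Ob \<Longrightarrow> linear_on (Cb X Y \<times> BA) (BA \<times> Cb X Y) (\<psi> X Y)"
  using ent unfolding entwining_def by blast

lemma \<gamma>_linear: "X \<in> Ob \<Longrightarrow> linear_on (BA \<times> Cb X X) BA (\<gamma> X)"
  using cointegral unfolding norm_cointegral_def by blast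

lemma cointegral_colinear:
  "X \<in> Ob \<Longrightarrow> Y \<in> Ob \<Longrightarrow> f \<in> FS (Cb X Y) \<Longrightarrow>
    tmap (\<lambda>x. x) (\<psi> X Y) (assocr (tmap (\<psi> X Y) (\<gamma> X) (ins_mid (coev BA) (\<delta> X X Y f)))) =
    tmap (\<lambda>x. x) (tmap (\<gamma> Y) (\<lambda>x. x)) (tmap (\<lambda>x. x) assocl (assocr (tens (coev BA) (\<delta> X Y Y f))))"
  using cointegral unfolding norm_cointegral_def id_def by blast

lemma cointegral_entwined:
  "X \<in> Ob \<Longrightarrow> t \<in> FS (Cb X X \<times> BA) \<Longrightarrow>
    tmap (\<lambda>x. x) mu (tmap (\<lambda>x. x) (tmap (\<gamma> X) (\<lambda>x. x)) (tmap (\<lambda>x. x) assocl (assocr (tens (coev BA) t)))) =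
    tmap mu (\<gamma> X) (ins_mid (coev BA) (\<psi> X X t))"
  using cointegral unfolding norm_cointegral_def id_def by blast

lemma cointegral_normalized:
  "X \<in> Ob \<Longrightarrow> f \<in> FS (Cb X X) \<Longrightarrow>
    mu (tmap (\<lambda>x. x) (\<gamma> X) (assocr (tens (coev BA) f))) = vsmul (\<epsilon> X f) one"
  using cointegral unfolding norm_cointegral_def id_def by blast

lemma coev_in_FS: "(coev BA :: _ \<Rightarrow> 'k) \<in> FS (BA \<times> BA)"
  using coev_FS[OF finite_BA] .

end

locale averaging = cointegral_setting Ob Cb \<delta> \<epsilon> BA mu one \<psi> \<gamma> +
  M2: comodA_module Ob Cb \<delta> \<epsilon> BA mu one \<psi> B2 \<rho>2 act2 +
  M3: comodA_module Ob Cb \<delta> \<epsilon> BA mu one \<psi> B3 \<rho>3 act3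
  for Ob :: "'o set" and Cb :: "'o \<Rightarrow> 'o \<Rightarrow> 'c set"
    and \<delta> :: "'o \<Rightarrow> 'o \<Rightarrow> 'o \<Rightarrow> ('c \<Rightarrow> 'k::field) \<Rightarrow> ('c \<times> 'c \<Rightarrow> 'k)"
    and \<epsilon> :: "'o \<Rightarrow> ('c \<Rightarrow> 'k) \<Rightarrow> 'k"
    and BA :: "'a set" and mu :: "('a \<times> 'a \<Rightarrow> 'k) \<Rightarrow> ('a \<Rightarrow> 'k)" and one :: "'a \<Rightarrow> 'k"
    and \<psi> :: "'o \<Rightarrow> 'o \<Rightarrow> ('c \<times> 'a \<Rightarrow> 'k) \<Rightarrow> ('a \<times> 'c \<Rightarrow> 'k)"
    and \<gamma> :: "'o \<Rightarrow> ('a \<times> 'c \<Rightarrow> 'k) \<Rightarrow> ('a \<Rightarrow> 'k)"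
    and B2 :: "'o \<Rightarrow> 'm set" and \<rho>2 :: "'o \<Rightarrow> 'o \<Rightarrow> ('m \<Rightarrow> 'k) \<Rightarrow> ('m \<times> 'c \<Rightarrow> 'k)"
    and act2 :: "'o \<Rightarrow> ('m \<times> 'a \<Rightarrow> 'k) \<Rightarrow> ('m \<Rightarrow> 'k)"
    and B3 :: "'o \<Rightarrow> 'n set" and \<rho>3 :: "'o \<Rightarrow> 'o \<Rightarrow> ('n \<Rightarrow> 'k) \<Rightarrow> ('n \<times> 'c \<Rightarrow> 'k)"
    and act3 :: "'o \<Rightarrow> ('n \<times> 'a \<Rightarrow> 'k) \<Rightarrow> ('n \<Rightarrow> 'k)" +
  fixes g0 :: "'o \<Rightarrow> ('m \<Rightarrow> 'k) \<Rightarrow> ('n \<Rightarrow> 'k)"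
  assumes g0_comod_hom: "comod_hom Ob Cb B2 \<rho>2 B3 \<rho>3 g0"
begin

lemma g0_linear: "X \<in> Ob \<Longrightarrow> linear_on (B2 X) (B3 X) (g0 X)"
  by (rule comod_hom_linear[OF g0_comod_hom])

text \<open>In the notation of the paper, with \<open>a\<^sub>b\<close> the basis of \<open>A\<close>:
  \<open>\<Gamma>\<^sub>X c = \<Sum>\<^sub>b a\<^sub>b \<otimes> \<gamma>\<^sub>X (a\<^sub>b\<^sup>* \<otimes> c)\<close> and \<open>\<Lambda>\<^sub>X u (x \<otimes> y) = g0 (u x) y\<close>.\<close>

definition "\<Gamma> X c = tmap (\<lambda>x. x) (\<gamma> X) (assocr (tens (coev BA) c))"
definition "g0_act X t = g0 X (act2 X t)"
definition "\<Lambda> X u w = act3 X (tmap (\<lambda>x. g0_act X (tens u x)) (\<lambda>x. x) w)"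
definition "avg_tens X s = act3 X (tmap (g0_act X) (\<lambda>x. x) (assocl (tmap (\<lambda>x. x) (\<Gamma> X) s)))"
definition "avg X m = avg_tens X (\<rho>2 X X m)"

lemma \<Gamma>_linear: "X \<in> Ob \<Longrightarrow> linear_on (Cb X X) (BA \<times> BA) (\<Gamma> X)"
  unfolding \<Gamma>_def
  by (intro linear_on_comp[OF linear_on_tmap[OF linear_on_id \<gamma>_linear]
        linear_on_comp[OF linear_on_assocr linear_on_tens_right[OF coev_in_FS]]])

lemma g0_act_linear: "X \<in> Ob \<Longrightarrow> linear_on (B2 X \<times> BA) (B3 X) (g0_act X)"
  unfolding g0_act_def by (intro linear_on_comp[OF g0_linear M2.action_linear])

lemma \<Lambda>_linear: "X \<in> Ob \<Longrightarrow> u \<in> FS (B2 X) \<Longrightarrow> linear_on (BA \<times> BA) (B3 X) (\<Lambda> X u)"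
  unfolding \<Lambda>_def
  by (intro linear_on_comp[OF M3.action_linear
        linear_on_tmap[OF linear_on_comp[OF g0_act_linear linear_on_tens_right] linear_on_id]])

lemma avg_tens_linear: "X \<in> Ob \<Longrightarrow> linear_on (B2 X \<times> Cb X X) (B3 X) (avg_tens X)"
  unfolding avg_tens_def
  by (intro linear_on_comp[OF M3.action_linear linear_on_comp[OF linear_on_tmap[OF g0_act_linear linear_on_id]
        linear_on_comp[OF linear_on_assocl linear_on_tmap[OF linear_on_id \<Gamma>_linear]]]])

lemma avg_linear: "X \<in> Ob \<Longrightarrow> linear_on (B2 X) (B3 X) (avg X)"
  unfolding avg_def by (intro linear_on_comp[OF avg_tens_linear M2.coaction_linear])

lemma \<Gamma>_eq_vsum:
  assumes X: "X \<in> Ob" and c: "c \<in> FS (Cb X X)"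
  shows "\<Gamma> X c = vsum BA (\<lambda>b. tens (bvec b) (\<gamma> X (tens (bvec b) c)))"
proof -
  have "assocr (tens (coev BA) c) = vsum BA (\<lambda>b. tens (bvec b) (tens (bvec b) c))"
    by (simp add: coev_eq_vsum[OF finite_BA] tens_vsum_left assocr_vsum)
  then show ?thesis
    unfolding \<Gamma>_def using c
    by (simp add: tmap_vsum_tens[OF vlinear_on_id linear_on_imp_vlinear_on[OF \<gamma>_linear[OF X]] finite_BA, of _ BA])
qed

lemma mu_\<Gamma>: "X \<in> Ob \<Longrightarrow> c \<in> FS (Cb X X) \<Longrightarrow> mu (\<Gamma> X c) = vsmul (\<epsilon> X c) one"
  unfolding \<Gamma>_def by (rule cointegral_normalized)

lemma \<Lambda>_tens:
  assumes X: "X \<in> Ob" and u: "u \<in> FS (B2 X)" and x: "x \<in> FS BA" and y: "y \<in> FS BA"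
  shows "\<Lambda> X u (tens x y) = act3 X (tens (g0_act X (tens u x)) y)"
  unfolding \<Lambda>_def
  by (subst tmap_tens[OF linear_on_imp_vlinear_on[OF linear_on_comp[OF g0_act_linear[OF X] linear_on_tens_right[OF u]]]
        vlinear_on_id x y]) (rule refl)

lemma avg_tens_tens:
  assumes X: "X \<in> Ob" and u: "u \<in> FS (B2 X)" and c: "c \<in> FS (Cb X X)"
  shows "avg_tens X (tens u c) = \<Lambda> X u (\<Gamma> X c)"
proof -
  have w: "\<Gamma> X c \<in> FS (BA \<times> BA)" using linear_on_FS[OF \<Gamma>_linear[OF X] c] .
  have "tmap (\<lambda>x. x) (\<Gamma> X) (tens u c) = tens u (\<Gamma> X c)"
    by (rule tmap_tens[OF vlinear_on_id linear_on_imp_vlinear_on[OF \<Gamma>_linear[OF X]] u c])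
  moreover have "tmap (g0_act X) (\<lambda>x. x) (tmap (tens u) (\<lambda>x. x) (\<Gamma> X c)) =
      tmap (\<lambda>x. g0_act X (tens u x)) (\<lambda>x. x) (\<Gamma> X c)"
    by (rule tmap_comp[OF linear_on_imp_maps_into[OF linear_on_tens_right[OF u]]
          linear_on_imp_maps_into[OF linear_on_id] linear_on_imp_vlinear_on[OF g0_act_linear[OF X]] vlinear_on_id w])
  ultimately show ?thesis
    unfolding avg_tens_def \<Lambda>_def by (simp add: assocl_tens_eq_tmap[OF w])
qed

lemma \<Lambda>_\<Gamma>:
  assumes X: "X \<in> Ob" and u: "u \<in> FS (B2 X)" and c: "c \<in> FS (Cb X X)"
  shows "\<Lambda> X u (\<Gamma> X c) = vsum BA (\<lambda>b. act3 X (tens (g0_act X (tens u (bvec b))) (\<gamma> X (tens (bvec b) c))))"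
proof -
  have "\<gamma> X (tens (bvec b) c) \<in> FS BA" if "b \<in> BA" for b
    using that c by (intro linear_on_FS[OF \<gamma>_linear[OF X]]) auto
  then show ?thesis
    unfolding \<Gamma>_eq_vsum[OF X c]
    by (subst vlinear_on_vsum[OF linear_on_imp_vlinear_on[OF \<Lambda>_linear[OF X u]] finite_BA])
      (auto intro!: vsum_cong \<Lambda>_tens[OF X u])
qed

subsection \<open>The average extends \<open>f\<close>\<close>

text \<open>Where \<open>g0\<close> is already \<open>A\<close>-linear, averaging does not change it: this is normalization (3).\<close>

lemma \<Lambda>_\<Gamma>_of_A_linear:
  assumes X: "X \<in> Ob" and u: "u \<in> FS (B2 X)" and N: "N \<in> FS (B3 X)" and c: "c \<in> FS (Cb X X)"
    and A_linear: "\<And>b. b \<in> BA \<Longrightarrow> g0_act X (tens u (bvec b)) = act3 X (tens N (bvec b))"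
  shows "\<Lambda> X u (\<Gamma> X c) = vsmul (\<epsilon> X c) N"
proof -
  define gb where "gb b = \<gamma> X (tens (bvec b) c)" for b
  have gb: "gb b \<in> FS BA" if "b \<in> BA" for b
    unfolding gb_def using that c by (intro linear_on_FS[OF \<gamma>_linear[OF X]]) auto
  have act_N: "linear_on (BA \<times> BA) (B3 X) (\<lambda>w. act3 X (tens N (mu w)))"
    by (rule linear_on_comp[OF M3.action_linear[OF X] linear_on_comp[OF linear_on_tens_right[OF N] mu_linear]])
  have "\<Lambda> X u (\<Gamma> X c) = vsum BA (\<lambda>b. act3 X (tens (act3 X (tens N (bvec b))) (gb b)))"
    unfolding \<Lambda>_\<Gamma>[OF X u c] gb_def by (rule vsum_cong) (simp add: A_linear)
  also have "\<dots> = vsum BA (\<lambda>b. act3 X (tens N (mu (tens (bvec b) (gb b)))))"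
    using gb by (intro vsum_cong M3.action_tens_assoc[OF mu_linear X N]) auto
  also have "\<dots> = act3 X (tens N (mu (vsum BA (\<lambda>b. tens (bvec b) (gb b)))))"
    using gb by (intro vlinear_on_vsum[OF linear_on_imp_vlinear_on[OF act_N] finite_BA, symmetric]) auto
  also have "vsum BA (\<lambda>b. tens (bvec b) (gb b)) = \<Gamma> X c"
    unfolding \<Gamma>_eq_vsum[OF X c] gb_def ..
  also have "act3 X (tens N (mu (\<Gamma> X c))) = act3 X (vsmul (\<epsilon> X c) (tens N one))"
    by (simp add: mu_\<Gamma>[OF X c] vlinear_on_vsmul[OF vlinear_on_tens_right one_FS])
  also have "\<dots> = vsmul (\<epsilon> X c) N"
    using N one_FS
    by (simp add: vlinear_on_vsmul[OF linear_on_imp_vlinear_on[OF M3.action_linear[OF X]]] M3.action_unit[OF X])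
  finally show ?thesis .
qed

context
  fixes B1 :: "'o \<Rightarrow> 'm1 set" and \<rho>1 act1 i f
  assumes M1: "comodA_module Ob Cb \<delta> \<epsilon> BA mu one \<psi> B1 \<rho>1 act1"
    and i: "comodA_hom Ob Cb BA B1 \<rho>1 act1 B2 \<rho>2 act2 i"
    and f: "comodA_hom Ob Cb BA B1 \<rho>1 act1 B3 \<rho>3 act3 f"
    and g0_i: "\<And>X n. X \<in> Ob \<Longrightarrow> n \<in> FS (B1 X) \<Longrightarrow> g0 X (i X n) = f X n"
begin

lemma avg_tens_extends:
  assumes X: "X \<in> Ob" and s: "s \<in> FS (B1 X \<times> Cb X X)"
  shows "avg_tens X (tmap (i X) (\<lambda>x. x) s) = f X (econtr_r (\<epsilon> X) s)"
proof -
  have i_linear: "linear_on (B1 X) (B2 X) (i X)" and f_linear: "linear_on (B1 X) (B3 X) (f X)"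
    using comod_hom_linear[OF comodA_hom_comod_hom, OF i X] comod_hom_linear[OF comodA_hom_comod_hom, OF f X] .
  show ?thesis
  proof (rule vlinear_on_eq_basis[where \<Phi>="\<lambda>s. avg_tens X (tmap (i X) (\<lambda>x. x) s)", OF _ _ _ s])
    show "vlinear_on (B1 X \<times> Cb X X) (\<lambda>s. avg_tens X (tmap (i X) (\<lambda>x. x) s))"
      by (rule linear_on_imp_vlinear_on[OF linear_on_comp[OF avg_tens_linear[OF X] linear_on_tmap[OF i_linear linear_on_id]]])
    show "vlinear_on (B1 X \<times> Cb X X) (\<lambda>s. f X (econtr_r (\<epsilon> X) s))"
      unfolding econtr_r_lin_ext
      by (rule vlinear_on_comp[OF linear_on_imp_vlinear_on[OF f_linear] maps_into_lin_ext vlinear_on_lin_ext]) auto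
    fix p assume "p \<in> B1 X \<times> Cb X X"
    then obtain n c where p: "p = (n, c)"
      and n: "(bvec n :: _ \<Rightarrow> 'k) \<in> FS (B1 X)" and c: "(bvec c :: _ \<Rightarrow> 'k) \<in> FS (Cb X X)"
      by auto
    have "g0_act X (tens (i X (bvec n)) (bvec b)) = act3 X (tens (f X (bvec n)) (bvec b))" if "b \<in> BA" for b
      using that n g0_i[OF X linear_on_FS[OF comodA_module.action_linear[OF M1 X]]]
      by (simp add: g0_act_def comodA_hom_action_tens[OF i X, symmetric] comodA_hom_action_tens[OF f X])
    then have "avg_tens X (tmap (i X) (\<lambda>x. x) (bvec p)) = vsmul (\<epsilon> X (bvec c)) (f X (bvec n))"
      using n c linear_on_FS[OF i_linear n] linear_on_FS[OF f_linear n]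
      by (simp add: p tmap_bvec avg_tens_tens[OF X] \<Lambda>_\<Gamma>_of_A_linear[OF X])
    also have "\<dots> = f X (econtr_r (\<epsilon> X) (bvec p))"
      using n by (simp add: p econtr_r_lin_ext vlinear_on_vsmul[OF linear_on_imp_vlinear_on[OF f_linear]])
    finally show "avg_tens X (tmap (i X) (\<lambda>x. x) (bvec p)) = f X (econtr_r (\<epsilon> X) (bvec p))" .
  qed
qed

lemma avg_extends:
  assumes X: "X \<in> Ob" and n: "n \<in> FS (B1 X)"
  shows "avg X (i X n) = f X n"
proof -
  have "avg X (i X n) = avg_tens X (tmap (i X) (\<lambda>x. x) (\<rho>1 X X n))"
    unfolding avg_def using comod_hom_coaction[OF comodA_hom_comod_hom[OF i] X X n] by simp
  also have "\<dots> = f X (econtr_r (\<epsilon> X) (\<rho>1 X X n))"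
    by (rule avg_tens_extends[OF X linear_on_FS[OF comodA_module.coaction_linear[OF M1 X X] n]])
  also have "\<dots> = f X n"
    by (simp add: comodA_module.counit[OF M1 X n])
  finally show ?thesis .
qed

end

subsection \<open>The average is \<open>A\<close>-linear\<close>

lemma \<Lambda>_mult_right:
  assumes X: "X \<in> Ob" and u: "u \<in> FS (B2 X)" and \<alpha>: "\<alpha> \<in> FS BA" and w: "w \<in> FS (BA \<times> BA)"
  shows "\<Lambda> X u (tmap (\<lambda>x. x) (\<lambda>x. mu (tens x \<alpha>)) w) = act3 X (tens (\<Lambda> X u w) \<alpha>)"
proof (rule vlinear_on_eq_basis[where \<Phi>="\<lambda>w. \<Lambda> X u (tmap (\<lambda>x. x) (\<lambda>x. mu (tens x \<alpha>)) w)"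
      and \<Psi>="\<lambda>w. act3 X (tens (\<Lambda> X u w) \<alpha>)", OF _ _ _ w])
  show "vlinear_on (BA \<times> BA) (\<lambda>w. \<Lambda> X u (tmap (\<lambda>x. x) (\<lambda>x. mu (tens x \<alpha>)) w))"
    by (rule linear_on_imp_vlinear_on[OF linear_on_comp[OF \<Lambda>_linear[OF X u]
          linear_on_tmap[OF linear_on_id linear_on_comp[OF mu_linear linear_on_tens_left[OF \<alpha>]]]]])
  show "vlinear_on (BA \<times> BA) (\<lambda>w. act3 X (tens (\<Lambda> X u w) \<alpha>))"
    by (rule linear_on_imp_vlinear_on[OF linear_on_comp[OF M3.action_linear[OF X]
          linear_on_comp[OF linear_on_tens_left[OF \<alpha>] \<Lambda>_linear[OF X u]]]])
  fix p assume "p \<in> BA \<times> BA"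
  then obtain a1 a2 where p: "p = (a1, a2)"
    and a1: "(bvec a1 :: _ \<Rightarrow> 'k) \<in> FS BA" and a2: "(bvec a2 :: _ \<Rightarrow> 'k) \<in> FS BA" by auto
  have ua1: "g0_act X (tens u (bvec a1)) \<in> FS (B3 X)"
    using u a1 by (intro linear_on_FS[OF g0_act_linear[OF X]]) auto
  have "\<Lambda> X u (tmap (\<lambda>x. x) (\<lambda>x. mu (tens x \<alpha>)) (bvec p)) =
      act3 X (tens (g0_act X (tens u (bvec a1))) (mu (tens (bvec a2) \<alpha>)))"
    using a1 a2 \<alpha> by (simp add: p tmap_bvec \<Lambda>_tens[OF X u] linear_on_FS[OF mu_linear])
  also have "\<dots> = act3 X (tens (\<Lambda> X u (bvec p)) \<alpha>)"
    using a1 a2 \<alpha> ua1 by (simp add: p bvec_pair \<Lambda>_tens[OF X u] M3.action_tens_assoc[OF mu_linear X])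
  finally show "\<Lambda> X u (tmap (\<lambda>x. x) (\<lambda>x. mu (tens x \<alpha>)) (bvec p)) = act3 X (tens (\<Lambda> X u (bvec p)) \<alpha>)" .
qed

text \<open>The expression on the left of cointegral axiom (2), evaluated at \<open>c \<otimes> y\<close>,
  is \<open>\<Gamma>\<^sub>X c \<otimes> y\<close> up to associativity; the same holds for the right-hand side of (1).\<close>

lemma coev_\<gamma>_tens:
  assumes X: "X \<in> Ob" and c: "c \<in> FS (Cb X X)" and y: "y \<in> FS E"
  shows "tmap (\<lambda>x. x) (tmap (\<gamma> X) (\<lambda>x. x)) (tmap (\<lambda>x. x) assocl (assocr (tens (coev BA) (tens c y)))) =
    assocr (tens (\<Gamma> X c) y)"
proof -
  have \<gamma>b: "\<gamma> X (tens (bvec b) c) \<in> FS BA" if "b \<in> BA" for b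
    using that c by (intro linear_on_FS[OF \<gamma>_linear[OF X]]) auto
  have "assocr (tens (coev BA) (tens c y)) = vsum BA (\<lambda>b. tens (bvec b) (tens (bvec b) (tens c y)))"
    by (simp add: coev_eq_vsum[OF finite_BA] tens_vsum_left assocr_vsum)
  moreover have "tmap (\<lambda>x. x) assocl (vsum BA (\<lambda>b. tens (bvec b) (tens (bvec b) (tens c y)))) =
      vsum BA (\<lambda>b. tens (bvec b) (tens (tens (bvec b) c) y))"
    using c y by (subst tmap_vsum_tens[OF vlinear_on_id vlinear_on_assocl finite_BA, of _ BA]) auto
  moreover have "tmap (\<lambda>x. x) (tmap (\<gamma> X) (\<lambda>x. x)) (vsum BA (\<lambda>b. tens (bvec b) (tens (tens (bvec b) c) y))) =
      vsum BA (\<lambda>b. tens (bvec b) (tens (\<gamma> X (tens (bvec b) c)) y))"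
    using c y
    by (subst tmap_vsum_tens[OF vlinear_on_id vlinear_on_tmap finite_BA, where B=BA and E="(BA \<times> Cb X X) \<times> E"])
      (auto intro!: vsum_cong simp: tmap_tens[OF linear_on_imp_vlinear_on[OF \<gamma>_linear[OF X]] vlinear_on_id])
  moreover have "assocr (tens (\<Gamma> X c) y) = vsum BA (\<lambda>b. tens (bvec b) (tens (\<gamma> X (tens (bvec b) c)) y))"
    by (simp add: \<Gamma>_eq_vsum[OF X c] tens_vsum_left assocr_vsum)
  ultimately show ?thesis by simp
qed

lemma \<Gamma>_mult_right:
  assumes X: "X \<in> Ob" and c: "c \<in> FS (Cb X X)" and \<alpha>: "\<alpha> \<in> FS BA"
  shows "tmap (\<lambda>x. x) mu (tmap (\<lambda>x. x) (tmap (\<gamma> X) (\<lambda>x. x)) (tmap (\<lambda>x. x) assocl (assocr (tens (coev BA) (tens c \<alpha>)))))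
       = tmap (\<lambda>x. x) (\<lambda>x. mu (tens x \<alpha>)) (\<Gamma> X c)"
  using linear_on_FS[OF \<Gamma>_linear[OF X] c]
  by (simp add: coev_\<gamma>_tens[OF X c \<alpha>] assocr_tens_eq_tmap tmap_comp[OF linear_on_imp_maps_into[OF linear_on_id]
        linear_on_imp_maps_into[OF linear_on_tens_left[OF \<alpha>]] vlinear_on_id linear_on_imp_vlinear_on[OF mu_linear]])

lemma avg_tens_action_left:
  assumes X: "X \<in> Ob" and u: "u \<in> FS (B2 X)" and w: "w \<in> FS (BA \<times> Cb X X)"
  shows "avg_tens X (tmap (\<lambda>x. act2 X (tens u x)) (\<lambda>x. x) w) = \<Lambda> X u (tmap mu (\<gamma> X) (ins_mid (coev BA) w))"
proof (rule vlinear_on_eq_basis[where \<Phi>="\<lambda>w. avg_tens X (tmap (\<lambda>x. act2 X (tens u x)) (\<lambda>x. x) w)"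
      and \<Psi>="\<lambda>w. \<Lambda> X u (tmap mu (\<gamma> X) (ins_mid (coev BA) w))", OF _ _ _ w])
  show "vlinear_on (BA \<times> Cb X X) (\<lambda>w. avg_tens X (tmap (\<lambda>x. act2 X (tens u x)) (\<lambda>x. x) w))"
    by (rule linear_on_imp_vlinear_on[OF linear_on_comp[OF avg_tens_linear[OF X]
          linear_on_tmap[OF linear_on_comp[OF M2.action_linear[OF X] linear_on_tens_right[OF u]] linear_on_id]]])
  show "vlinear_on (BA \<times> Cb X X) (\<lambda>w. \<Lambda> X u (tmap mu (\<gamma> X) (ins_mid (coev BA) w)))"
    by (rule linear_on_imp_vlinear_on[OF linear_on_comp[OF \<Lambda>_linear[OF X u]
          linear_on_comp[OF linear_on_tmap[OF mu_linear \<gamma>_linear[OF X]] linear_on_ins_mid[OF coev_in_FS]]]])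
  fix p assume "p \<in> BA \<times> Cb X X"
  then obtain a c where p: "p = (a, c)"
    and a: "(bvec a :: _ \<Rightarrow> 'k) \<in> FS BA" and c: "(bvec c :: _ \<Rightarrow> 'k) \<in> FS (Cb X X)" by auto
  define ua where "ua = act2 X (tens u (bvec a))"
  have ua: "ua \<in> FS (B2 X)"
    unfolding ua_def using u a by (intro linear_on_FS[OF M2.action_linear[OF X]]) auto
  have ab: "mu (tens (bvec a) (bvec b)) \<in> FS BA" and \<gamma>b: "\<gamma> X (tens (bvec b) (bvec c)) \<in> FS BA"
    if "b \<in> BA" for b
    using that a c by (auto intro!: linear_on_FS[OF mu_linear] linear_on_FS[OF \<gamma>_linear[OF X]])
  have "avg_tens X (tmap (\<lambda>x. act2 X (tens u x)) (\<lambda>x. x) (bvec p)) = \<Lambda> X ua (\<Gamma> X (bvec c))"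
    using ua c by (simp add: p tmap_bvec ua_def avg_tens_tens[OF X])
  also have "\<dots> = vsum BA (\<lambda>b. act3 X (tens (g0_act X (tens ua (bvec b))) (\<gamma> X (tens (bvec b) (bvec c)))))"
    by (rule \<Lambda>_\<Gamma>[OF X ua c])
  also have "\<dots> = vsum BA (\<lambda>b. \<Lambda> X u (tens (mu (tens (bvec a) (bvec b))) (\<gamma> X (tens (bvec b) (bvec c)))))"
    using u a ab \<gamma>b by (intro vsum_cong) (simp add: \<Lambda>_tens[OF X u] ua_def g0_act_def M2.action_tens_assoc[OF mu_linear X])
  also have "\<dots> = \<Lambda> X u (vsum BA (\<lambda>b. tens (mu (tens (bvec a) (bvec b))) (\<gamma> X (tens (bvec b) (bvec c)))))"
    using ab \<gamma>b by (intro vlinear_on_vsum[OF linear_on_imp_vlinear_on[OF \<Lambda>_linear[OF X u]] finite_BA, symmetric]) auto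
  also have "vsum BA (\<lambda>b. tens (mu (tens (bvec a) (bvec b))) (\<gamma> X (tens (bvec b) (bvec c)))) =
      tmap mu (\<gamma> X) (ins_mid (coev BA) (bvec p))"
    unfolding p bvec_pair ins_mid_coev_tens[OF finite_BA] using a c
    by (subst tmap_vsum_tens[OF linear_on_imp_vlinear_on[OF mu_linear] linear_on_imp_vlinear_on[OF \<gamma>_linear[OF X]]
          finite_BA]) auto
  finally show "avg_tens X (tmap (\<lambda>x. act2 X (tens u x)) (\<lambda>x. x) (bvec p)) =
      \<Lambda> X u (tmap mu (\<gamma> X) (ins_mid (coev BA) (bvec p)))" .
qed

text \<open>Moving \<open>\<alpha>\<close> across the coaction with \<open>\<psi>\<close> and then through \<open>\<gamma>\<close> with axiom (2)
  turns it into a right multiplication of the average.\<close>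

lemma avg_tens_ent_act:
  assumes X: "X \<in> Ob" and \<alpha>: "\<alpha> \<in> FS BA" and s: "s \<in> FS (B2 X \<times> Cb X X)"
  shows "avg_tens X (ent_act (\<psi> X X) (act2 X) s \<alpha>) = act3 X (tens (avg_tens X s) \<alpha>)"
proof (rule vlinear_on_eq_basis[where \<Phi>="\<lambda>s. avg_tens X (ent_act (\<psi> X X) (act2 X) s \<alpha>)"
      and \<Psi>="\<lambda>s. act3 X (tens (avg_tens X s) \<alpha>)", OF _ _ _ s])
  show "vlinear_on (B2 X \<times> Cb X X) (\<lambda>s. avg_tens X (ent_act (\<psi> X X) (act2 X) s \<alpha>))"
    by (rule linear_on_imp_vlinear_on[OF linear_on_comp[OF avg_tens_linear[OF X]
          ent_act_linear[OF \<psi>_linear[OF X X] M2.action_linear[OF X] \<alpha>]]])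
  show "vlinear_on (B2 X \<times> Cb X X) (\<lambda>s. act3 X (tens (avg_tens X s) \<alpha>))"
    by (rule linear_on_imp_vlinear_on[OF linear_on_comp[OF M3.action_linear[OF X]
          linear_on_comp[OF linear_on_tens_left[OF \<alpha>] avg_tens_linear[OF X]]]])
  fix q assume "q \<in> B2 X \<times> Cb X X"
  then obtain m c where q: "q = (m, c)"
    and m: "(bvec m :: _ \<Rightarrow> 'k) \<in> FS (B2 X)" and c: "(bvec c :: _ \<Rightarrow> 'k) \<in> FS (Cb X X)" by auto
  have w: "\<psi> X X (tens (bvec c) \<alpha>) \<in> FS (BA \<times> Cb X X)"
    using c \<alpha> by (intro linear_on_FS[OF \<psi>_linear[OF X X]]) auto
  have "avg_tens X (ent_act (\<psi> X X) (act2 X) (bvec q) \<alpha>)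
      = \<Lambda> X (bvec m) (tmap mu (\<gamma> X) (ins_mid (coev BA) (\<psi> X X (tens (bvec c) \<alpha>))))"
    unfolding q bvec_pair
    by (simp add: ent_act_tens[OF \<psi>_linear[OF X X] M2.action_linear[OF X] m c \<alpha>] avg_tens_action_left[OF X m w])
  also have "tmap mu (\<gamma> X) (ins_mid (coev BA) (\<psi> X X (tens (bvec c) \<alpha>))) =
      tmap (\<lambda>x. x) (\<lambda>x. mu (tens x \<alpha>)) (\<Gamma> X (bvec c))"
    unfolding cointegral_entwined[OF X tens_FS[OF c \<alpha>], symmetric] by (rule \<Gamma>_mult_right[OF X c \<alpha>])
  also have "\<Lambda> X (bvec m) \<dots> = act3 X (tens (\<Lambda> X (bvec m) (\<Gamma> X (bvec c))) \<alpha>)"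
    by (rule \<Lambda>_mult_right[OF X m \<alpha> linear_on_FS[OF \<Gamma>_linear[OF X] c]])
  also have "\<Lambda> X (bvec m) (\<Gamma> X (bvec c)) = avg_tens X (bvec q)"
    unfolding q bvec_pair by (rule avg_tens_tens[OF X m c, symmetric])
  finally show "avg_tens X (ent_act (\<psi> X X) (act2 X) (bvec q) \<alpha>) = act3 X (tens (avg_tens X (bvec q)) \<alpha>)" .
qed

lemma avg_action:
  assumes X: "X \<in> Ob" and t: "t \<in> FS (B2 X \<times> BA)"
  shows "avg X (act2 X t) = act3 X (tmap (avg X) (\<lambda>x. x) t)"
proof (rule vlinear_on_eq_basis[where \<Phi>="\<lambda>t. avg X (act2 X t)"
      and \<Psi>="\<lambda>t. act3 X (tmap (avg X) (\<lambda>x. x) t)", OF _ _ _ t])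
  show "vlinear_on (B2 X \<times> BA) (\<lambda>t. avg X (act2 X t))"
    by (rule linear_on_imp_vlinear_on[OF linear_on_comp[OF avg_linear[OF X] M2.action_linear[OF X]]])
  show "vlinear_on (B2 X \<times> BA) (\<lambda>t. act3 X (tmap (avg X) (\<lambda>x. x) t))"
    by (rule linear_on_imp_vlinear_on[OF linear_on_comp[OF M3.action_linear[OF X]
          linear_on_tmap[OF avg_linear[OF X] linear_on_id]]])
  fix p assume "p \<in> B2 X \<times> BA"
  then obtain m a where p: "p = (m, a)"
    and m: "(bvec m :: _ \<Rightarrow> 'k) \<in> FS (B2 X)" and a: "(bvec a :: _ \<Rightarrow> 'k) \<in> FS BA" by auto
  have "avg X (act2 X (bvec p)) = avg_tens X (ent_act (\<psi> X X) (act2 X) (\<rho>2 X X (bvec m)) (bvec a))"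
    by (simp add: avg_def p bvec_pair M2.coaction_action_tens[OF X X m a])
  also have "\<dots> = act3 X (tens (avg X (bvec m)) (bvec a))"
    unfolding avg_def by (rule avg_tens_ent_act[OF X a linear_on_FS[OF M2.coaction_linear[OF X X] m]])
  finally show "avg X (act2 X (bvec p)) = act3 X (tmap (avg X) (\<lambda>x. x) (bvec p))"
    by (simp add: p tmap_bvec)
qed

subsection \<open>The average is colinear\<close>

text \<open>\<open>\<Omega>\<close> is what \<open>\<rho>3 \<circ> avg_tens\<close> becomes once the coaction has been pushed through to \<open>\<rho>2\<close>;
  \<open>\<Omega>' w\<close> is the same with \<open>\<Gamma>\<^sub>X c\<close> replaced by an arbitrary \<open>w \<in> A \<otimes> A\<close>. By axiom (1),
  \<open>cointegral_twist X Y (\<delta> X X Y f)\<close> is the right-hand side treated in \<open>coev_\<gamma>_tens\<close>.\<close>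

definition "cointegral_twist X Y w =
  tmap (\<lambda>x. x) (\<psi> X Y) (assocr (tmap (\<psi> X Y) (\<gamma> X) (ins_mid (coev BA) w)))"
definition "double_twist X Y d w = tmap (\<lambda>x. x) (\<psi> X Y) (assocr (tmap (\<lambda>x. \<psi> X Y (tens d x)) (\<lambda>x. x) w))"
definition "\<Theta> Y v z = tmap (\<Lambda> Y v) (\<lambda>x. x) (assocl z)"
definition "\<Omega> X Y = lin_ext (\<lambda>q. \<Theta> Y (bvec (fst q)) (cointegral_twist X Y (bvec (snd q))))"
definition "\<Omega>' X Y w = lin_ext (\<lambda>q. \<Theta> Y (bvec (fst q)) (double_twist X Y (bvec (snd q)) w))"

lemma cointegral_twist_linear:
  "X \<in> Ob \<Longrightarrow> Y \<in> Ob \<Longrightarrow> linear_on (Cb X Y \<times> Cb X X) (BA \<times> (BA \<times> Cb X Y)) (cointegral_twist X Y)"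
  unfolding cointegral_twist_def
  by (rule linear_on_comp[OF linear_on_tmap[OF linear_on_id \<psi>_linear] linear_on_comp[OF linear_on_assocr
        linear_on_comp[OF linear_on_tmap[OF \<psi>_linear \<gamma>_linear] linear_on_ins_mid[OF coev_in_FS]]]])

lemma double_twist_linear:
  "X \<in> Ob \<Longrightarrow> Y \<in> Ob \<Longrightarrow> d \<in> FS (Cb X Y) \<Longrightarrow>
    linear_on (BA \<times> BA) (BA \<times> (BA \<times> Cb X Y)) (double_twist X Y d)"
  unfolding double_twist_def
  by (rule linear_on_comp[OF linear_on_tmap[OF linear_on_id \<psi>_linear] linear_on_comp[OF linear_on_assocr
        linear_on_tmap[OF linear_on_comp[OF \<psi>_linear linear_on_tens_right] linear_on_id]]])

lemma \<Theta>_linear: "Y \<in> Ob \<Longrightarrow> v \<in> FS (B2 Y) \<Longrightarrow> linear_on (BA \<times> (BA \<times> D)) (B3 Y \<times> D) (\<Theta> Y v)"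
  unfolding \<Theta>_def by (rule linear_on_comp[OF linear_on_tmap[OF \<Lambda>_linear linear_on_id] linear_on_assocl])

lemma \<Omega>_linear:
  "X \<in> Ob \<Longrightarrow> Y \<in> Ob \<Longrightarrow> linear_on (B2 Y \<times> (Cb X Y \<times> Cb X X)) (B3 Y \<times> Cb X Y) (\<Omega> X Y)"
  unfolding \<Omega>_def
  by (rule linear_on_lin_ext) (auto intro!: linear_on_FS[OF \<Theta>_linear] linear_on_FS[OF cointegral_twist_linear])

lemma \<Omega>'_linear:
  "X \<in> Ob \<Longrightarrow> Y \<in> Ob \<Longrightarrow> w \<in> FS (BA \<times> BA) \<Longrightarrow> linear_on (B2 Y \<times> Cb X Y) (B3 Y \<times> Cb X Y) (\<Omega>' X Y w)"
  unfolding \<Omega>'_def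
  by (rule linear_on_lin_ext) (auto intro!: linear_on_FS[OF \<Theta>_linear] linear_on_FS[OF double_twist_linear])

lemma cointegral_twist_bvec:
  assumes X: "X \<in> Ob" and Y: "Y \<in> Ob" and d: "d \<in> Cb X Y" and c: "c \<in> Cb X X"
  shows "cointegral_twist X Y (bvec (d, c)) = double_twist X Y (bvec d) (\<Gamma> X (bvec c))"
proof -
  have c': "(bvec c :: _ \<Rightarrow> 'k) \<in> FS (Cb X X)" using c by simp
  have \<gamma>b: "\<gamma> X (tens (bvec b) (bvec c)) \<in> FS BA" if "b \<in> BA" for b
    using that c by (intro linear_on_FS[OF \<gamma>_linear[OF X]]) auto
  have "tmap (\<psi> X Y) (\<gamma> X) (ins_mid (coev BA) (bvec (d, c))) =
      vsum BA (\<lambda>b. tens (\<psi> X Y (tens (bvec d) (bvec b))) (\<gamma> X (tens (bvec b) (bvec c))))"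
    unfolding bvec_pair ins_mid_coev_tens[OF finite_BA] using d c
    by (subst tmap_vsum_tens[OF linear_on_imp_vlinear_on[OF \<psi>_linear[OF X Y]]
          linear_on_imp_vlinear_on[OF \<gamma>_linear[OF X]] finite_BA]) auto
  moreover have "tmap (\<lambda>x. \<psi> X Y (tens (bvec d) x)) (\<lambda>x. x) (\<Gamma> X (bvec c)) =
      vsum BA (\<lambda>b. tens (\<psi> X Y (tens (bvec d) (bvec b))) (\<gamma> X (tens (bvec b) (bvec c))))"
    unfolding \<Gamma>_eq_vsum[OF X c'] using d \<gamma>b
    by (subst tmap_vsum_tens[OF linear_on_imp_vlinear_on[OF linear_on_comp[OF \<psi>_linear[OF X Y]
          linear_on_tens_right[of "bvec d"]]] vlinear_on_id finite_BA]) auto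
  ultimately show ?thesis
    unfolding cointegral_twist_def double_twist_def by simp
qed

lemma \<Omega>_assocr_tens:
  assumes X: "X \<in> Ob" and Y: "Y \<in> Ob" and c: "c \<in> Cb X X" and s: "s \<in> FS (B2 Y \<times> Cb X Y)"
  shows "\<Omega> X Y (assocr (tens s (bvec c))) = \<Omega>' X Y (\<Gamma> X (bvec c)) s"
proof (rule vlinear_on_eq_basis[where \<Phi>="\<lambda>s. \<Omega> X Y (assocr (tens s (bvec c)))", OF _ _ _ s])
  have c': "(bvec c :: _ \<Rightarrow> 'k) \<in> FS (Cb X X)" using c by simp
  show "vlinear_on (B2 Y \<times> Cb X Y) (\<lambda>s. \<Omega> X Y (assocr (tens s (bvec c))))"
    by (rule linear_on_imp_vlinear_on[OF linear_on_comp[OF \<Omega>_linear[OF X Y]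
          linear_on_comp[OF linear_on_assocr linear_on_tens_left[OF c']]]])
  show "vlinear_on (B2 Y \<times> Cb X Y) (\<Omega>' X Y (\<Gamma> X (bvec c)))"
    by (rule linear_on_imp_vlinear_on[OF \<Omega>'_linear[OF X Y linear_on_FS[OF \<Gamma>_linear[OF X] c']]])
  fix q assume "q \<in> B2 Y \<times> Cb X Y"
  then obtain v d where q: "q = (v, d)" and d: "d \<in> Cb X Y" by auto
  have "assocr (tens (bvec q) (bvec c)) = (bvec (v, (d, c)) :: _ \<Rightarrow> 'k)"
    unfolding q bvec_pair by simp
  then show "\<Omega> X Y (assocr (tens (bvec q) (bvec c))) = \<Omega>' X Y (\<Gamma> X (bvec c)) (bvec q)"
    unfolding \<Omega>_def \<Omega>'_def by (simp add: q cointegral_twist_bvec[OF X Y d c])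
qed

lemma ent_act_g0_act:
  assumes X: "X \<in> Ob" and Y: "Y \<in> Ob" and v: "v \<in> FS (B2 Y)" and a: "a \<in> FS BA"
    and z: "z \<in> FS (BA \<times> Cb X Y)"
  shows "ent_act (\<psi> X Y) (act3 Y) (tmap (\<lambda>x. g0_act Y (tens v x)) (\<lambda>x. x) z) a =
    \<Theta> Y v (tmap (\<lambda>x. x) (\<psi> X Y) (assocr (tens z a)))"
proof (rule vlinear_on_eq_basis[where \<Phi>="\<lambda>z. ent_act (\<psi> X Y) (act3 Y) (tmap (\<lambda>x. g0_act Y (tens v x)) (\<lambda>x. x) z) a"
      and \<Psi>="\<lambda>z. \<Theta> Y v (tmap (\<lambda>x. x) (\<psi> X Y) (assocr (tens z a)))", OF _ _ _ z])
  show "vlinear_on (BA \<times> Cb X Y) (\<lambda>z. ent_act (\<psi> X Y) (act3 Y) (tmap (\<lambda>x. g0_act Y (tens v x)) (\<lambda>x. x) z) a)"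
    by (rule linear_on_imp_vlinear_on[OF linear_on_comp[OF ent_act_linear[OF \<psi>_linear[OF X Y] M3.action_linear[OF Y] a]
          linear_on_tmap[OF linear_on_comp[OF g0_act_linear[OF Y] linear_on_tens_right[OF v]] linear_on_id]]])
  show "vlinear_on (BA \<times> Cb X Y) (\<lambda>z. \<Theta> Y v (tmap (\<lambda>x. x) (\<psi> X Y) (assocr (tens z a))))"
    by (rule linear_on_imp_vlinear_on[OF linear_on_comp[OF \<Theta>_linear[OF Y v] linear_on_comp[OF
          linear_on_tmap[OF linear_on_id \<psi>_linear[OF X Y]] linear_on_comp[OF linear_on_assocr linear_on_tens_left[OF a]]]]])
  fix q assume "q \<in> BA \<times> Cb X Y"
  then obtain b d where q: "q = (b, d)"
    and b: "(bvec b :: _ \<Rightarrow> 'k) \<in> FS BA" and d: "(bvec d :: _ \<Rightarrow> 'k) \<in> FS (Cb X Y)" by auto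
  define n where "n = g0_act Y (tens v (bvec b))"
  have n: "n \<in> FS (B3 Y)"
    unfolding n_def using v b by (intro linear_on_FS[OF g0_act_linear[OF Y]]) auto
  define y where "y = \<psi> X Y (tens (bvec d) a)"
  have y: "y \<in> FS (BA \<times> Cb X Y)"
    unfolding y_def using d a by (intro linear_on_FS[OF \<psi>_linear[OF X Y]]) auto
  have "ent_act (\<psi> X Y) (act3 Y) (tmap (\<lambda>x. g0_act Y (tens v x)) (\<lambda>x. x) (bvec q)) a =
      tmap (\<lambda>x. act3 Y (tens n x)) (\<lambda>x. x) y"
    unfolding y_def using n d a
    by (simp add: q tmap_bvec n_def[symmetric] ent_act_tens[OF \<psi>_linear[OF X Y] M3.action_linear[OF Y]])
  also have "\<dots> = tmap (\<lambda>x. \<Lambda> Y v (tens (bvec b) x)) (\<lambda>x. x) y"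
    by (rule tmap_cong[OF y]) (simp_all add: \<Lambda>_tens[OF Y v b] n_def)
  also have "\<dots> = \<Theta> Y v (tens (bvec b) y)"
    unfolding \<Theta>_def assocl_tens_eq_tmap[OF y]
    by (rule tmap_comp[OF linear_on_imp_maps_into[OF linear_on_tens_right[OF b]] linear_on_imp_maps_into[OF linear_on_id]
          linear_on_imp_vlinear_on[OF \<Lambda>_linear[OF Y v]] vlinear_on_id y, symmetric])
  also have "tens (bvec b) y = tmap (\<lambda>x. x) (\<psi> X Y) (assocr (tens (bvec q) a))"
    unfolding q bvec_pair assocr_tens y_def using b d a
    by (intro tmap_tens[OF vlinear_on_id linear_on_imp_vlinear_on[OF \<psi>_linear[OF X Y]], symmetric]) auto
  finally show "ent_act (\<psi> X Y) (act3 Y) (tmap (\<lambda>x. g0_act Y (tens v x)) (\<lambda>x. x) (bvec q)) a =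
      \<Theta> Y v (tmap (\<lambda>x. x) (\<psi> X Y) (assocr (tens (bvec q) a)))" .
qed

lemma ent_act_g0_ent_act:
  assumes X: "X \<in> Ob" and Y: "Y \<in> Ob" and a1: "a1 \<in> BA" and a2: "a2 \<in> BA" and s: "s \<in> FS (B2 Y \<times> Cb X Y)"
  shows "ent_act (\<psi> X Y) (act3 Y) (tmap (g0 Y) (\<lambda>x. x) (ent_act (\<psi> X Y) (act2 Y) s (bvec a1))) (bvec a2) =
    \<Omega>' X Y (bvec (a1, a2)) s"
proof -
  have a1': "(bvec a1 :: _ \<Rightarrow> 'k) \<in> FS BA" and a2': "(bvec a2 :: _ \<Rightarrow> 'k) \<in> FS BA" using a1 a2 by auto
  let ?lhs = "\<lambda>s. ent_act (\<psi> X Y) (act3 Y) (tmap (g0 Y) (\<lambda>x. x) (ent_act (\<psi> X Y) (act2 Y) s (bvec a1))) (bvec a2)"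
  show ?thesis
  proof (rule vlinear_on_eq_basis[where \<Phi>="?lhs", OF _ _ _ s])
    show "vlinear_on (B2 Y \<times> Cb X Y) ?lhs"
      by (rule linear_on_imp_vlinear_on[OF linear_on_comp[OF ent_act_linear[OF \<psi>_linear[OF X Y] M3.action_linear[OF Y] a2']
            linear_on_comp[OF linear_on_tmap[OF g0_linear[OF Y] linear_on_id]
            ent_act_linear[OF \<psi>_linear[OF X Y] M2.action_linear[OF Y] a1']]]])
    show "vlinear_on (B2 Y \<times> Cb X Y) (\<Omega>' X Y (bvec (a1, a2)))"
      using a1 a2 by (intro linear_on_imp_vlinear_on[OF \<Omega>'_linear[OF X Y]]) simp
    fix q assume "q \<in> B2 Y \<times> Cb X Y"
    then obtain v d where q: "q = (v, d)"
      and v: "(bvec v :: _ \<Rightarrow> 'k) \<in> FS (B2 Y)" and d: "(bvec d :: _ \<Rightarrow> 'k) \<in> FS (Cb X Y)" by auto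
    define z where "z = \<psi> X Y (tens (bvec d) (bvec a1))"
    have z: "z \<in> FS (BA \<times> Cb X Y)"
      unfolding z_def using d a1 by (intro linear_on_FS[OF \<psi>_linear[OF X Y]]) auto
    have "tmap (g0 Y) (\<lambda>x. x) (ent_act (\<psi> X Y) (act2 Y) (bvec q) (bvec a1)) =
        tmap (\<lambda>x. g0_act Y (tens (bvec v) x)) (\<lambda>x. x) z"
      unfolding q bvec_pair z_def g0_act_def ent_act_tens[OF \<psi>_linear[OF X Y] M2.action_linear[OF Y] v d a1']
      by (rule tmap_comp[OF linear_on_imp_maps_into[OF linear_on_comp[OF M2.action_linear[OF Y] linear_on_tens_right[OF v]]]
            linear_on_imp_maps_into[OF linear_on_id] linear_on_imp_vlinear_on[OF g0_linear[OF Y]] vlinear_on_id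
            z[unfolded z_def]])
    then have "?lhs (bvec q) = \<Theta> Y (bvec v) (tmap (\<lambda>x. x) (\<psi> X Y) (assocr (tens z (bvec a2))))"
      by (simp add: ent_act_g0_act[OF X Y v a2' z])
    also have "\<dots> = \<Omega>' X Y (bvec (a1, a2)) (bvec q)"
      unfolding \<Omega>'_def double_twist_def by (simp add: q tmap_bvec z_def)
    finally show "?lhs (bvec q) = \<Omega>' X Y (bvec (a1, a2)) (bvec q)" .
  qed
qed

lemma coaction_\<Lambda>:
  assumes X: "X \<in> Ob" and Y: "Y \<in> Ob" and u: "u \<in> FS (B2 X)" and w: "w \<in> FS (BA \<times> BA)"
  shows "\<rho>3 X Y (\<Lambda> X u w) = \<Omega>' X Y w (\<rho>2 X Y u)"
proof (rule vlinear_on_eq_basis[where \<Phi>="\<lambda>w. \<rho>3 X Y (\<Lambda> X u w)" and \<Psi>="\<lambda>w. \<Omega>' X Y w (\<rho>2 X Y u)", OF _ _ _ w])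
  have \<rho>u: "\<rho>2 X Y u \<in> FS (B2 Y \<times> Cb X Y)" by (rule linear_on_FS[OF M2.coaction_linear[OF X Y] u])
  show "vlinear_on (BA \<times> BA) (\<lambda>w. \<rho>3 X Y (\<Lambda> X u w))"
    by (rule linear_on_imp_vlinear_on[OF linear_on_comp[OF M3.coaction_linear[OF X Y] \<Lambda>_linear[OF X u]]])
  show "vlinear_on (BA \<times> BA) (\<lambda>w. \<Omega>' X Y w (\<rho>2 X Y u))"
    unfolding \<Omega>'_def
    by (rule vlinear_on_lin_ext_param[OF _ \<rho>u])
      (auto intro!: linear_on_imp_vlinear_on[OF linear_on_comp[OF \<Theta>_linear[OF Y] double_twist_linear[OF X Y]]])
  fix p assume "p \<in> BA \<times> BA"
  then obtain a1 a2 where p: "p = (a1, a2)" and a1: "a1 \<in> BA" and a2: "a2 \<in> BA" by auto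
  have a1': "(bvec a1 :: _ \<Rightarrow> 'k) \<in> FS BA" and a2': "(bvec a2 :: _ \<Rightarrow> 'k) \<in> FS BA" using a1 a2 by auto
  have ua1: "act2 X (tens u (bvec a1)) \<in> FS (B2 X)"
    using u a1' by (intro linear_on_FS[OF M2.action_linear[OF X]]) auto
  have "\<rho>3 X Y (\<Lambda> X u (bvec p)) = \<rho>3 X Y (act3 X (tens (g0 X (act2 X (tens u (bvec a1)))) (bvec a2)))"
    by (simp add: p bvec_pair \<Lambda>_tens[OF X u a1' a2'] g0_act_def)
  also have "\<dots> = ent_act (\<psi> X Y) (act3 Y) (tmap (g0 Y) (\<lambda>x. x) (ent_act (\<psi> X Y) (act2 Y) (\<rho>2 X Y u) (bvec a1))) (bvec a2)"
    using u a1' a2' ua1 linear_on_FS[OF g0_linear[OF X] ua1]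
    by (simp add: M3.coaction_action_tens[OF X Y] comod_hom_coaction[OF g0_comod_hom X Y]
        M2.coaction_action_tens[OF X Y])
  also have "\<dots> = \<Omega>' X Y (bvec p) (\<rho>2 X Y u)"
    unfolding p by (rule ent_act_g0_ent_act[OF X Y a1 a2 \<rho>u])
  finally show "\<rho>3 X Y (\<Lambda> X u (bvec p)) = \<Omega>' X Y (bvec p) (\<rho>2 X Y u)" .
qed

lemma coaction_avg_tens:
  assumes X: "X \<in> Ob" and Y: "Y \<in> Ob" and s: "s \<in> FS (B2 X \<times> Cb X X)"
  shows "\<rho>3 X Y (avg_tens X s) = \<Omega> X Y (assocr (tmap (\<rho>2 X Y) (\<lambda>x. x) s))"
proof (rule vlinear_on_eq_basis[where \<Phi>="\<lambda>s. \<rho>3 X Y (avg_tens X s)"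
      and \<Psi>="\<lambda>s. \<Omega> X Y (assocr (tmap (\<rho>2 X Y) (\<lambda>x. x) s))", OF _ _ _ s])
  show "vlinear_on (B2 X \<times> Cb X X) (\<lambda>s. \<rho>3 X Y (avg_tens X s))"
    by (rule linear_on_imp_vlinear_on[OF linear_on_comp[OF M3.coaction_linear[OF X Y] avg_tens_linear[OF X]]])
  show "vlinear_on (B2 X \<times> Cb X X) (\<lambda>s. \<Omega> X Y (assocr (tmap (\<rho>2 X Y) (\<lambda>x. x) s)))"
    by (rule linear_on_imp_vlinear_on[OF linear_on_comp[OF \<Omega>_linear[OF X Y]
          linear_on_comp[OF linear_on_assocr linear_on_tmap[OF M2.coaction_linear[OF X Y] linear_on_id]]]])
  fix p assume "p \<in> B2 X \<times> Cb X X"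
  then obtain m c where p: "p = (m, c)" and m: "(bvec m :: _ \<Rightarrow> 'k) \<in> FS (B2 X)" and c: "c \<in> Cb X X" by auto
  have "\<rho>3 X Y (avg_tens X (bvec p)) = \<Omega>' X Y (\<Gamma> X (bvec c)) (\<rho>2 X Y (bvec m))"
    using c by (simp add: p bvec_pair avg_tens_tens[OF X m] coaction_\<Lambda>[OF X Y m] linear_on_FS[OF \<Gamma>_linear[OF X]])
  also have "\<dots> = \<Omega> X Y (assocr (tmap (\<rho>2 X Y) (\<lambda>x. x) (bvec p)))"
    by (simp add: p tmap_bvec \<Omega>_assocr_tens[OF X Y c linear_on_FS[OF M2.coaction_linear[OF X Y] m]])
  finally show "\<rho>3 X Y (avg_tens X (bvec p)) = \<Omega> X Y (assocr (tmap (\<rho>2 X Y) (\<lambda>x. x) (bvec p)))" .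
qed

lemma \<Omega>_tens:
  assumes X: "X \<in> Ob" and Y: "Y \<in> Ob" and v: "v \<in> B2 Y" and w: "w \<in> FS (Cb X Y \<times> Cb X X)"
  shows "\<Omega> X Y (tens (bvec v) w) = \<Theta> Y (bvec v) (cointegral_twist X Y w)"
proof (rule vlinear_on_eq_basis[where \<Phi>="\<lambda>w. \<Omega> X Y (tens (bvec v) w)", OF _ _ _ w])
  have v': "(bvec v :: _ \<Rightarrow> 'k) \<in> FS (B2 Y)" using v by simp
  show "vlinear_on (Cb X Y \<times> Cb X X) (\<lambda>w. \<Omega> X Y (tens (bvec v) w))"
    by (rule linear_on_imp_vlinear_on[OF linear_on_comp[OF \<Omega>_linear[OF X Y] linear_on_tens_right[OF v']]])
  show "vlinear_on (Cb X Y \<times> Cb X X) (\<lambda>w. \<Theta> Y (bvec v) (cointegral_twist X Y w))"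
    by (rule linear_on_imp_vlinear_on[OF linear_on_comp[OF \<Theta>_linear[OF Y v'] cointegral_twist_linear[OF X Y]]])
qed (simp add: \<Omega>_def flip: bvec_pair)

lemma \<Theta>_cointegral:
  assumes X: "X \<in> Ob" and Y: "Y \<in> Ob" and v: "v \<in> B2 Y" and z: "z \<in> FS (Cb Y Y \<times> Cb X Y)"
  shows "\<Theta> Y (bvec v) (tmap (\<lambda>x. x) (tmap (\<gamma> Y) (\<lambda>x. x)) (tmap (\<lambda>x. x) assocl (assocr (tens (coev BA) z))))
       = tmap (avg_tens Y) (\<lambda>x. x) (assocl (tens (bvec v) z))"
proof (rule vlinear_on_eq_basis[where \<Phi>="\<lambda>z. \<Theta> Y (bvec v)
        (tmap (\<lambda>x. x) (tmap (\<gamma> Y) (\<lambda>x. x)) (tmap (\<lambda>x. x) assocl (assocr (tens (coev BA) z))))"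
      and \<Psi>="\<lambda>z. tmap (avg_tens Y) (\<lambda>x. x) (assocl (tens (bvec v) z))", OF _ _ _ z])
  have v': "(bvec v :: _ \<Rightarrow> 'k) \<in> FS (B2 Y)" using v by simp
  show "vlinear_on (Cb Y Y \<times> Cb X Y) (\<lambda>z. \<Theta> Y (bvec v)
      (tmap (\<lambda>x. x) (tmap (\<gamma> Y) (\<lambda>x. x)) (tmap (\<lambda>x. x) assocl (assocr (tens (coev BA) z)))))"
    by (rule linear_on_imp_vlinear_on[OF linear_on_comp[OF \<Theta>_linear[OF Y v']
          linear_on_comp[OF linear_on_tmap[OF linear_on_id linear_on_tmap[OF \<gamma>_linear[OF Y] linear_on_id]]
          linear_on_comp[OF linear_on_tmap[OF linear_on_id linear_on_assocl]
          linear_on_comp[OF linear_on_assocr linear_on_tens_right[OF coev_in_FS]]]]]])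
  show "vlinear_on (Cb Y Y \<times> Cb X Y) (\<lambda>z. tmap (avg_tens Y) (\<lambda>x. x) (assocl (tens (bvec v) z)))"
    by (rule linear_on_imp_vlinear_on[OF linear_on_comp[OF linear_on_tmap[OF avg_tens_linear[OF Y] linear_on_id]
          linear_on_comp[OF linear_on_assocl linear_on_tens_right[OF v']]]])
  fix q assume "q \<in> Cb Y Y \<times> Cb X Y"
  then obtain c d where q: "q = (c, d)"
    and c: "(bvec c :: _ \<Rightarrow> 'k) \<in> FS (Cb Y Y)" and d: "(bvec d :: _ \<Rightarrow> 'k) \<in> FS (Cb X Y)" by auto
  have \<Gamma>c: "\<Gamma> Y (bvec c) \<in> FS (BA \<times> BA)" by (rule linear_on_FS[OF \<Gamma>_linear[OF Y] c])
  have "\<Theta> Y (bvec v) (assocr (tens (\<Gamma> Y (bvec c)) (bvec d))) = tens (\<Lambda> Y (bvec v) (\<Gamma> Y (bvec c))) (bvec d)"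
    unfolding \<Theta>_def using \<Gamma>c d
    by (simp add: tmap_tens[OF linear_on_imp_vlinear_on[OF \<Lambda>_linear[OF Y v']] vlinear_on_id])
  also have "\<dots> = tmap (avg_tens Y) (\<lambda>x. x) (assocl (tens (bvec v) (tens (bvec c) (bvec d))))"
    using v' c d by (simp add: avg_tens_tens[OF Y v' c] tmap_tens[OF linear_on_imp_vlinear_on[OF avg_tens_linear[OF Y]]])
  finally show "\<Theta> Y (bvec v) (tmap (\<lambda>x. x) (tmap (\<gamma> Y) (\<lambda>x. x))
      (tmap (\<lambda>x. x) assocl (assocr (tens (coev BA) (bvec q))))) =
      tmap (avg_tens Y) (\<lambda>x. x) (assocl (tens (bvec v) (bvec q)))"
    by (simp add: q bvec_pair coev_\<gamma>_tens[OF Y c d])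
qed

lemma \<Omega>_comult:
  assumes X: "X \<in> Ob" and Y: "Y \<in> Ob" and s: "s \<in> FS (B2 Y \<times> Cb X Y)"
  shows "\<Omega> X Y (tmap (\<lambda>x. x) (\<delta> X X Y) s) = tmap (avg_tens Y) (\<lambda>x. x) (assocl (tmap (\<lambda>x. x) (\<delta> X Y Y) s))"
proof (rule vlinear_on_eq_basis[where \<Phi>="\<lambda>s. \<Omega> X Y (tmap (\<lambda>x. x) (\<delta> X X Y) s)"
      and \<Psi>="\<lambda>s. tmap (avg_tens Y) (\<lambda>x. x) (assocl (tmap (\<lambda>x. x) (\<delta> X Y Y) s))", OF _ _ _ s])
  show "vlinear_on (B2 Y \<times> Cb X Y) (\<lambda>s. \<Omega> X Y (tmap (\<lambda>x. x) (\<delta> X X Y) s))"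
    by (rule linear_on_imp_vlinear_on[OF linear_on_comp[OF \<Omega>_linear[OF X Y]
          linear_on_tmap[OF linear_on_id \<delta>_linear[OF X X Y]]]])
  show "vlinear_on (B2 Y \<times> Cb X Y) (\<lambda>s. tmap (avg_tens Y) (\<lambda>x. x) (assocl (tmap (\<lambda>x. x) (\<delta> X Y Y) s)))"
    by (rule linear_on_imp_vlinear_on[OF linear_on_comp[OF linear_on_tmap[OF avg_tens_linear[OF Y] linear_on_id]
          linear_on_comp[OF linear_on_assocl linear_on_tmap[OF linear_on_id \<delta>_linear[OF X Y Y]]]]])
  fix p assume "p \<in> B2 Y \<times> Cb X Y"
  then obtain v f where p: "p = (v, f)" and v: "v \<in> B2 Y" and f: "(bvec f :: _ \<Rightarrow> 'k) \<in> FS (Cb X Y)" by auto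
  have "\<Omega> X Y (tmap (\<lambda>x. x) (\<delta> X X Y) (bvec p)) = \<Theta> Y (bvec v) (cointegral_twist X Y (\<delta> X X Y (bvec f)))"
    by (simp add: p tmap_bvec \<Omega>_tens[OF X Y v linear_on_FS[OF \<delta>_linear[OF X X Y] f]])
  also have "\<dots> = tmap (avg_tens Y) (\<lambda>x. x) (assocl (tens (bvec v) (\<delta> X Y Y (bvec f))))"
    unfolding cointegral_twist_def cointegral_colinear[OF X Y f]
    by (rule \<Theta>_cointegral[OF X Y v linear_on_FS[OF \<delta>_linear[OF X Y Y] f]])
  finally show "\<Omega> X Y (tmap (\<lambda>x. x) (\<delta> X X Y) (bvec p)) =
      tmap (avg_tens Y) (\<lambda>x. x) (assocl (tmap (\<lambda>x. x) (\<delta> X Y Y) (bvec p)))"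
    by (simp add: p tmap_bvec)
qed

lemma avg_coaction:
  assumes X: "X \<in> Ob" and Y: "Y \<in> Ob" and m: "m \<in> FS (B2 X)"
  shows "\<rho>3 X Y (avg X m) = tmap (avg Y) (\<lambda>x. x) (\<rho>2 X Y m)"
proof -
  have \<rho>m: "\<rho>2 X Y m \<in> FS (B2 Y \<times> Cb X Y)" by (rule linear_on_FS[OF M2.coaction_linear[OF X Y] m])
  have "\<rho>3 X Y (avg X m) = \<Omega> X Y (tmap (\<lambda>x. x) (\<delta> X X Y) (\<rho>2 X Y m))"
    unfolding avg_def
    by (simp add: coaction_avg_tens[OF X Y linear_on_FS[OF M2.coaction_linear[OF X X] m]] M2.coassoc[OF X Y X m])
  also have "\<dots> = tmap (avg_tens Y) (\<lambda>x. x) (tmap (\<rho>2 Y Y) (\<lambda>x. x) (\<rho>2 X Y m))"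
    by (simp add: \<Omega>_comult[OF X Y \<rho>m] M2.coassoc[OF X Y Y m, symmetric])
  also have "\<dots> = tmap (avg Y) (\<lambda>x. x) (\<rho>2 X Y m)"
    unfolding avg_def
    by (rule tmap_comp[OF linear_on_imp_maps_into[OF M2.coaction_linear[OF Y Y]] linear_on_imp_maps_into[OF linear_on_id]
          linear_on_imp_vlinear_on[OF avg_tens_linear[OF Y]] vlinear_on_id \<rho>m])
  finally show ?thesis .
qed

lemma avg_comodA_hom: "comodA_hom Ob Cb BA B2 \<rho>2 act2 B3 \<rho>3 act3 avg"
  unfolding comodA_hom_def comod_hom_def id_def
  using avg_linear avg_coaction avg_action by blast

end

section \<open>The forgetful functor is Maschke and semisimple\<close>

lemma (in cointegral_setting) comodA_hom_extension:
  fixes B1 :: "'o \<Rightarrow> 'm1 set" and B2 :: "'o \<Rightarrow> 'm2 set" and B3 :: "'o \<Rightarrow> 'm3 set"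
    and r :: "'o \<Rightarrow> ('m2 \<Rightarrow> 'k) \<Rightarrow> ('m1 \<Rightarrow> 'k)"
  assumes M1: "comodA Ob Cb \<delta> \<epsilon> BA mu one \<psi> B1 \<rho>1 act1"
    and M2: "comodA Ob Cb \<delta> \<epsilon> BA mu one \<psi> B2 \<rho>2 act2"
    and M3: "comodA Ob Cb \<delta> \<epsilon> BA mu one \<psi> B3 \<rho>3 act3"
    and i: "comodA_hom Ob Cb BA B1 \<rho>1 act1 B2 \<rho>2 act2 i"
    and f: "comodA_hom Ob Cb BA B1 \<rho>1 act1 B3 \<rho>3 act3 f"
    and r: "comod_hom Ob Cb B2 \<rho>2 B1 \<rho>1 r"
    and r_i: "\<forall>X\<in>Ob. \<forall>m\<in>FS (B1 X). r X (i X m) = m"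
  shows "\<exists>g. comodA_hom Ob Cb BA B2 \<rho>2 act2 B3 \<rho>3 act3 g \<and> (\<forall>X\<in>Ob. \<forall>m\<in>FS (B1 X). g X (i X m) = f X m)"
proof -
  have f_r: "comod_hom Ob Cb B2 \<rho>2 B3 \<rho>3 (\<lambda>X m. f X (r X m))"
    by (rule comod_hom_comp[OF comodA_module.intro[OF M2] r comodA_hom_comod_hom[OF f]])
  interpret averaging Ob Cb \<delta> \<epsilon> BA mu one \<psi> \<gamma> B2 \<rho>2 act2 B3 \<rho>3 act3 "\<lambda>X m. f X (r X m)"
    by unfold_locales (fact M2 M3 f_r)+
  have "avg X (i X m) = f X m" if "X \<in> Ob" and "m \<in> FS (B1 X)" for X m
    using avg_extends[OF comodA_module.intro[OF M1] i f] r_i that by simp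
  then show ?thesis
    using avg_comodA_hom by blast
qed

theorem theorem7p8:
  fixes Ob :: "'o set"
    and Cb :: "'o \<Rightarrow> 'o \<Rightarrow> 'c set"
    and \<delta> :: "'o \<Rightarrow> 'o \<Rightarrow> 'o \<Rightarrow> ('c \<Rightarrow> 'k::field) \<Rightarrow> ('c \<times> 'c \<Rightarrow> 'k)"
    and \<epsilon> :: "'o \<Rightarrow> ('c \<Rightarrow> 'k) \<Rightarrow> 'k"
    and BA :: "'a set"
    and mu :: "('a \<times> 'a \<Rightarrow> 'k) \<Rightarrow> ('a \<Rightarrow> 'k)"
    and one :: "'a \<Rightarrow> 'k"
    and \<psi> :: "'o \<Rightarrow> 'o \<Rightarrow> ('c \<times> 'a \<Rightarrow> 'k) \<Rightarrow> ('a \<times> 'c \<Rightarrow> 'k)"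
    and \<gamma> :: "'o \<Rightarrow> ('a \<times> 'c \<Rightarrow> 'k) \<Rightarrow> ('a \<Rightarrow> 'k)"
  assumes "coalg_so Ob Cb \<delta> \<epsilon>"
    and "kalg BA mu one"
    and "finite BA"
    and "entwining Ob Cb \<delta> \<epsilon> BA mu one \<psi>"
    and "norm_cointegral Ob Cb \<delta> \<epsilon> BA mu one \<psi> \<gamma>"
  shows "Gpsi_semisimple Ob Cb \<delta> \<epsilon> BA mu one \<psi> TYPE('m1) TYPE('m2) TYPE('m3) \<and>
         Gpsi_Maschke Ob Cb \<delta> \<epsilon> BA mu one \<psi> TYPE('m1) TYPE('m2) TYPE('m3)"
proof
  interpret cointegral_setting Ob Cb \<delta> \<epsilon> BA mu one \<psi> \<gamma>
    by unfold_locales (fact assms)+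
  show "Gpsi_semisimple Ob Cb \<delta> \<epsilon> BA mu one \<psi> TYPE('m1) TYPE('m2) TYPE('m3)"
    unfolding Gpsi_semisimple_def
    by (intro allI impI, elim conjE exE, rule comodA_hom_extension[where f="\<lambda>X m. m"])
      (assumption | rule comodA_hom_id comodA_module.intro)+
  show "Gpsi_Maschke Ob Cb \<delta> \<epsilon> BA mu one \<psi> TYPE('m1) TYPE('m2) TYPE('m3)"
    unfolding Gpsi_Maschke_def
    by (intro allI impI, elim conjE exE, rule comodA_hom_extension) assumption+
qed

end
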